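(* Suppose $\mathbf t\in\Sigma^\circ$ and let $\mathbf x\in(\Sigma^* )^\circ$ satisfy \[ \mathbf t^T\left(\mathbf x\mathbf x^T-(\nu-1)H(\mathbf x)^{-1}\right)\mathbf t\ \ge\ 0. \] Then $\mathbf x\in\mathcal C(\mathbf t)$, equivalently $\mathbf t\in\mathcal P(\mathbf x)$. In particular, if $\mathbf s=-g(\mathbf x)$ for some $\mathbf x\in(\Sigma^* )^\circ$, then $\mathbf x$ is a dual certificate (i.e. $H(\mathbf x)^{-1}\mathbf t\in\Sigma^*$) for every polynomial $\mathbf t$ satisfying $\|\mathbf t-\mathbf s\|^*_{\mathbf x}\le 1$.
   Context: Fix nonzero real polynomials $g_1,\dots,g_m$ in $n$ variables and nonnegative integers $d_1,\dots,d_m$. Let $\mathcal V$ be the real vector space of polynomials $\sum_{i=1}^m g_i r_i$ with $\deg r_i\le 2d_i$, and $\Sigma\subseteq\mathcal V$ the cone of weighted sums of squares $\sum_i g_i\sigma_i$ with each $\sigma_i$ a sum of squares of polynomials of degree at most $d_i$; assume $\Sigma$ is a proper cone. Fix a basis $\mathbf q=(q_1,\dots,q_U)$ of $\mathcal V$, identify $\mathcal V$ and its dual with $\mathbb R^U$ with the standard inner product and Euclidean norm $\|\cdot\|$; $\Sigma^*$ is the dual cone, $K^\circ$ the interior of $K$. For each $i$ fix a basis $\mathbf p_i$ (of size $L_i$) of polynomials of degree at most $d_i$ and let $\Lambda_i:\mathbb R^U\to\mathbb S^{L_i}$ be the unique linear map with $\sum_u q_u\Lambda_i(\mathbf e_u)=g_i\mathbf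 p_i\mathbf p_i^T$; $\Lambda=\Lambda_1\oplus\cdots\oplus\Lambda_m$ (block diagonal), $\Lambda^*$ its adjoint. Then $(\Sigma^* )^\circ=\{\mathbf x:\Lambda(\mathbf x)\succ0\}$ and $\Sigma^*=\{\mathbf x:\Lambda(\mathbf x)\succeq0\}$. On $(\Sigma^* )^\circ$ let $f(\mathbf x)=-\ln\det\Lambda(\mathbf x)$, with gradient $g(\mathbf x)=-\Lambda^*(\Lambda(\mathbf x)^{-1})$ (not to be confused with the weights $g_i$) and Hessian $H(\mathbf x)\mathbf w=\Lambda^*(\Lambda(\mathbf x)^{-1}\Lambda(\mathbf w)\Lambda(\mathbf x)^{-1})$, positive definite. Let $\nu=\sum_i L_i$. The dual local norm is $\|\mathbf s\|^*_{\mathbf x}=\|H(\mathbf x)^{-1/2}\mathbf s\|$. For $\mathbf s\in\Sigma$, $\mathcal C(\mathbf s)=\{\mathbf x\in(\Sigma^* )^\circ: H(\mathbf x)^{-1}\mathbf s\in\Sigma^*\}$ (the dual certificates of $\mathbf s$), and for $\mathbf x\in(\Sigma^* )^\circ$, $\mathcal P(\mathbf x)=\{\mathbf s\in\Sigma: H(\mathbf x)^{-1}\mathbf s\in\Sigma^*\}$. *)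

theory Defs
  imports "HOL-Analysis.Analysis" "HOL-Library.Poly_Mapping"
begin

text \<open>A real polynomial is a finitely supported map from monomials (finitely supported
  exponent vectors, variable index to exponent) to real coefficients.\<close>
type_synonym rpoly = "(nat \<Rightarrow>\<^sub>0 nat) \<Rightarrow>\<^sub>0 real"

definition pconst :: "real \<Rightarrow> rpoly" where
  "pconst c = Poly_Mapping.single 0 c"

definition in_vars :: "nat \<Rightarrow> rpoly \<Rightarrow> bool" where
  "in_vars n p \<longleftrightarrow> (\<forall>\<alpha>\<in>Poly_Mapping.keys (p::rpoly). \<forall>v\<in>Poly_Mapping.keys \<alpha>. v < n)"

definition total_deg_le :: "nat \<Rightarrow> rpoly \<Rightarrow> bool" where
  "total_deg_le k p \<longleftrightarrow> (\<forall>\<alpha>\<in>Poly_Mapping.keys (p::rpoly). (\<Sum>v\<in>Poly_Mapping.keys \<alpha>. Poly_Mapping.lookup \<alpha> v) \<le> k)"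

definition polys :: "nat \<Rightarrow> nat \<Rightarrow> rpoly set" where
  "polys n k = {p. in_vars n p \<and> total_deg_le k p}"

definition sos :: "nat \<Rightarrow> nat \<Rightarrow> rpoly set" where
  "sos n k = {\<sigma>. \<exists>hs. set hs \<subseteq> polys n k \<and> \<sigma> = sum_list (map (\<lambda>h. h * h) hs)}"

definition Vspace :: "nat \<Rightarrow> nat \<Rightarrow> (nat \<Rightarrow> rpoly) \<Rightarrow> (nat \<Rightarrow> nat) \<Rightarrow> rpoly set" where
  "Vspace n m g d = {\<Sum>i<m. g i * r i | r. \<forall>i<m. r i \<in> polys n (2 * d i)}"

definition WSOS :: "nat \<Rightarrow> nat \<Rightarrow> (nat \<Rightarrow> rpoly) \<Rightarrow> (nat \<Rightarrow> nat) \<Rightarrow> rpoly set" where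
  "WSOS n m g d = {\<Sum>i<m. g i * \<sigma> i | \<sigma>. \<forall>i<m. \<sigma> i \<in> sos n (d i)}"

definition poly_of :: "('U::finite \<Rightarrow> rpoly) \<Rightarrow> real^'U \<Rightarrow> rpoly" where
  "poly_of q c = (\<Sum>u\<in>UNIV. pconst (c $ u) * q u)"

definition coord :: "('U::finite \<Rightarrow> rpoly) \<Rightarrow> rpoly \<Rightarrow> real^'U" where
  "coord q P = (THE c. poly_of q c = P)"

definition is_basis_V :: "nat \<Rightarrow> nat \<Rightarrow> (nat \<Rightarrow> rpoly) \<Rightarrow> (nat \<Rightarrow> nat) \<Rightarrow> ('U::finite \<Rightarrow> rpoly) \<Rightarrow> bool" where
  "is_basis_V n m g d q \<longleftrightarrow>
     (\<forall>u. q u \<in> Vspace n m g d) \<and>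
     (\<forall>c. poly_of q c = 0 \<longrightarrow> c = 0) \<and>
     Vspace n m g d \<subseteq> range (poly_of q)"

definition is_basis_polys :: "nat \<Rightarrow> nat \<Rightarrow> nat \<Rightarrow> (nat \<Rightarrow> rpoly) \<Rightarrow> bool" where
  "is_basis_polys n k L b \<longleftrightarrow>
     (\<forall>j<L. b j \<in> polys n k) \<and>
     (\<forall>c. (\<Sum>j<L. pconst (c j) * b j) = 0 \<longrightarrow> (\<forall>j<L. c j = 0)) \<and>
     polys n k \<subseteq> {\<Sum>j<L. pconst (c j) * b j | c. True}"

definition Sig :: "nat \<Rightarrow> nat \<Rightarrow> (nat \<Rightarrow> rpoly) \<Rightarrow> (nat \<Rightarrow> nat) \<Rightarrow> ('U::finite \<Rightarrow> rpoly) \<Rightarrow> (real^'U) set" where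
  "Sig n m g d q = {c. poly_of q c \<in> WSOS n m g d}"

definition dual_cone :: "(real^'U::finite) set \<Rightarrow> (real^'U) set" where
  "dual_cone K = {x. \<forall>s\<in>K. 0 \<le> x \<bullet> s}"

definition proper_cone :: "(real^'U::finite) set \<Rightarrow> bool" where
  "proper_cone K \<longleftrightarrow> cone K \<and> convex K \<and> closed K \<and> interior K \<noteq> {} \<and> K \<inter> uminus ` K \<subseteq> {0}"

type_synonym bmat = "nat \<times> nat \<Rightarrow> nat \<times> nat \<Rightarrow> real"

definition bidx :: "nat \<Rightarrow> (nat \<Rightarrow> nat) \<Rightarrow> (nat \<times> nat) set" where
  "bidx m L = Sigma {..<m} (\<lambda>i. {..<L i})"

definition Lam :: "nat \<Rightarrow> (nat \<Rightarrow> rpoly) \<Rightarrow> (nat \<Rightarrow> nat) \<Rightarrow> (nat \<Rightarrow> nat \<Rightarrow> rpoly)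
    \<Rightarrow> ('U::finite \<Rightarrow> rpoly) \<Rightarrow> real^'U \<Rightarrow> bmat" where
  "Lam m g L p q x = (\<lambda>(i,j) (i',k).
     if (i,j) \<in> bidx m L \<and> (i',k) \<in> bidx m L \<and> i = i'
     then (\<Sum>u\<in>UNIV. x $ u * coord q (g i * p i j * p i k) $ u) else 0)"

definition bmat_mult :: "(nat \<times> nat) set \<Rightarrow> bmat \<Rightarrow> bmat \<Rightarrow> bmat" where
  "bmat_mult I A B = (\<lambda>a b. \<Sum>c\<in>I. A a c * B c b)"

definition btrace :: "(nat \<times> nat) set \<Rightarrow> bmat \<Rightarrow> real" where
  "btrace I A = (\<Sum>a\<in>I. A a a)"

definition binv :: "(nat \<times> nat) set \<Rightarrow> bmat \<Rightarrow> bmat" where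
  "binv I A = (THE B. (\<forall>a b. (a \<notin> I \<or> b \<notin> I) \<longrightarrow> B a b = 0) \<and>
      (\<forall>a\<in>I. \<forall>b\<in>I. bmat_mult I A B a b = (if a = b then 1 else 0)))"

text \<open>adjoint of Lambda: Lambda^*(Y)_u = < Lambda(e_u), Y > = tr(Lambda(e_u) Y)\<close>
definition Lam_adj :: "nat \<Rightarrow> (nat \<Rightarrow> rpoly) \<Rightarrow> (nat \<Rightarrow> nat) \<Rightarrow> (nat \<Rightarrow> nat \<Rightarrow> rpoly)
    \<Rightarrow> ('U::finite \<Rightarrow> rpoly) \<Rightarrow> bmat \<Rightarrow> real^'U" where
  "Lam_adj m g L p q Y = (\<chi> u. btrace (bidx m L) (bmat_mult (bidx m L) (Lam m g L p q (axis u 1)) Y))"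

definition grad :: "nat \<Rightarrow> (nat \<Rightarrow> rpoly) \<Rightarrow> (nat \<Rightarrow> nat) \<Rightarrow> (nat \<Rightarrow> nat \<Rightarrow> rpoly)
    \<Rightarrow> ('U::finite \<Rightarrow> rpoly) \<Rightarrow> real^'U \<Rightarrow> real^'U" where
  "grad m g L p q x = - Lam_adj m g L p q (binv (bidx m L) (Lam m g L p q x))"

definition Hess :: "nat \<Rightarrow> (nat \<Rightarrow> rpoly) \<Rightarrow> (nat \<Rightarrow> nat) \<Rightarrow> (nat \<Rightarrow> nat \<Rightarrow> rpoly)
    \<Rightarrow> ('U::finite \<Rightarrow> rpoly) \<Rightarrow> real^'U \<Rightarrow> real^'U^'U" where
  "Hess m g L p q x = (\<chi> v u. (Lam_adj m g L p q
      (let I = bidx m L; Li = binv I (Lam m g L p q x)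
       in bmat_mult I (bmat_mult I Li (Lam m g L p q (axis u 1))) Li)) $ v)"

definition psd_sqrt :: "real^'U::finite^'U \<Rightarrow> real^'U^'U" where
  "psd_sqrt A = (THE R. transpose R = R \<and> (\<forall>v. 0 \<le> v \<bullet> (R *v v)) \<and> R ** R = A)"

definition dual_local_norm :: "real^'U::finite^'U \<Rightarrow> real^'U \<Rightarrow> real" where
  "dual_local_norm Hx s = norm (psd_sqrt (matrix_inv Hx) *v s)"

definition Cert :: "(real^'U::finite) set \<Rightarrow> (real^'U \<Rightarrow> real^'U^'U) \<Rightarrow> real^'U \<Rightarrow> (real^'U) set" where
  "Cert K H s = {x \<in> interior (dual_cone K). matrix_inv (H x) *v s \<in> dual_cone K}"

definition Pset :: "(real^'U::finite) set \<Rightarrow> (real^'U \<Rightarrow> real^'U^'U) \<Rightarrow> real^'U \<Rightarrow> (real^'U) set" where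
  "Pset K H x = {s \<in> K. matrix_inv (H x) *v s \<in> dual_cone K}"

definition outer :: "real^'U::finite \<Rightarrow> real^'U^'U" where
  "outer x = (\<chi> i j. x $ i * x $ j)"

definition standing :: "nat \<Rightarrow> nat \<Rightarrow> (nat \<Rightarrow> rpoly) \<Rightarrow> (nat \<Rightarrow> nat) \<Rightarrow> (nat \<Rightarrow> nat)
    \<Rightarrow> (nat \<Rightarrow> nat \<Rightarrow> rpoly) \<Rightarrow> ('U::finite \<Rightarrow> rpoly) \<Rightarrow> bool" where
  "standing n m g d L p q \<longleftrightarrow>
     (\<forall>i<m. g i \<noteq> 0 \<and> in_vars n (g i)) \<and>
     proper_cone (Sig n m g d q) \<and>
     is_basis_V n m g d q \<and>
     (\<forall>i<m. is_basis_polys n (d i) (L i) (p i))"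

end

theory Submission
  imports Defs
begin

(* Let X = Lambda(x), which is positive definite for x in the interior of Sigma*, and for
   w = H(x)^-1 t let Y = Lambda(w). For the log-det barrier, t.x = tr(X^-1 Y) and
   t.H(x)^-1 t = w.H(x) w = tr(X^-1 Y X^-1 Y). In terms of the eigenvalues mu of
   X^-1/2 Y X^-1/2 the hypothesis reads (sum mu)^2 >= (nu - 1) * sum mu^2, and t.x > 0 gives
   sum mu > 0; by Cauchy-Schwarz on the remaining nu - 1 eigenvalues, no mu can be negative.
   So Y is positive semidefinite, which is exactly w in Sigma*.
   For the second claim, H(x) x = -g(x), hence H(x)^-1 t = x + d with
   d.H(x) d = (||t + g(x)||*_x)^2 <= 1. The eigenvalues of X^-1/2 Lambda(d) X^-1/2 then have
   squares summing to at most 1, so Lambda(x + d) = X^1/2 (1 + X^-1/2 Lambda(d) X^-1/2) X^1/2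
   is positive semidefinite. *)

section \<open>Matrices indexed by a finite set\<close>

text \<open>\<open>\<Lambda>(x)\<close> is indexed by the set \<open>bidx m L\<close> of pairs \<open>(i, j)\<close> with \<open>j < L i\<close>, which is
  not a type; so matrices are functions on pairs of indices, meaningful only on \<open>I \<times> I\<close>.\<close>

type_synonym 'a fmat = "'a \<Rightarrow> 'a \<Rightarrow> real"

definition mmult :: "'a set \<Rightarrow> 'a fmat \<Rightarrow> 'a fmat \<Rightarrow> 'a fmat" where
  "mmult I A B = (\<lambda>a b. \<Sum>c\<in>I. A a c * B c b)"

definition mtransp :: "'a fmat \<Rightarrow> 'a fmat" where
  "mtransp A = (\<lambda>a b. A b a)"

definition mone :: "'a set \<Rightarrow> 'a fmat" where
  "mone I = (\<lambda>a b. if a \<in> I \<and> b = a then 1 else 0)"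

definition mdiag :: "'a set \<Rightarrow> ('a \<Rightarrow> real) \<Rightarrow> 'a fmat" where
  "mdiag I f = (\<lambda>a b. if a \<in> I \<and> b = a then f a else 0)"

definition msupp :: "'a set \<Rightarrow> 'a fmat \<Rightarrow> bool" where
  "msupp I A \<longleftrightarrow> (\<forall>a b. a \<notin> I \<or> b \<notin> I \<longrightarrow> A a b = 0)"

definition mtrace :: "'a set \<Rightarrow> 'a fmat \<Rightarrow> real" where
  "mtrace I A = (\<Sum>a\<in>I. A a a)"

definition mvmult :: "'a set \<Rightarrow> 'a fmat \<Rightarrow> ('a \<Rightarrow> real) \<Rightarrow> 'a \<Rightarrow> real" where
  "mvmult I A v = (\<lambda>a. \<Sum>b\<in>I. A a b * v b)"

definition qform :: "'a set \<Rightarrow> 'a fmat \<Rightarrow> ('a \<Rightarrow> real) \<Rightarrow> real" where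
  "qform I A v = (\<Sum>a\<in>I. \<Sum>b\<in>I. v a * A a b * v b)"

definition morth :: "'a set \<Rightarrow> 'a fmat \<Rightarrow> bool" where
  "morth I Q \<longleftrightarrow> msupp I Q \<and> mmult I (mtransp Q) Q = mone I \<and> mmult I Q (mtransp Q) = mone I"

definition spectral_mat :: "'a set \<Rightarrow> 'a fmat \<Rightarrow> ('a \<Rightarrow> real) \<Rightarrow> 'a fmat" where
  "spectral_mat I Q f = mmult I (mmult I Q (mdiag I f)) (mtransp Q)"

definition psd_on :: "'a set \<Rightarrow> 'a fmat \<Rightarrow> bool" where
  "psd_on I A \<longleftrightarrow> (\<forall>v. 0 \<le> qform I A v)"

definition pd_on :: "'a set \<Rightarrow> 'a fmat \<Rightarrow> bool" where
  "pd_on I A \<longleftrightarrow> (\<forall>v. (\<exists>a\<in>I. v a \<noteq> 0) \<longrightarrow> 0 < qform I A v)"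

definition minverse :: "'a set \<Rightarrow> 'a fmat \<Rightarrow> 'a fmat \<Rightarrow> bool" where
  "minverse I A B \<longleftrightarrow> msupp I B \<and> mmult I A B = mone I \<and> mmult I B A = mone I"

lemma sum_eq_single_nonzero:
  "finite I \<Longrightarrow> a \<in> I \<Longrightarrow> (\<And>c. c \<in> I \<Longrightarrow> c \<noteq> a \<Longrightarrow> f c = 0) \<Longrightarrow> sum f I = f a"
  by (subst sum.remove[of I a]) (auto intro!: sum.neutral)

lemma mmult_assoc: "mmult I (mmult I A B) C = mmult I A (mmult I B C)"
proof (intro ext)
  fix a b
  have "mmult I (mmult I A B) C a b = (\<Sum>c\<in>I. \<Sum>d\<in>I. A a d * B d c * C c b)"
    by (simp add: mmult_def sum_distrib_right)
  also have "\<dots> = (\<Sum>d\<in>I. \<Sum>c\<in>I. A a d * B d c * C c b)"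
    by (rule sum.swap)
  also have "\<dots> = mmult I A (mmult I B C) a b"
    by (simp add: mmult_def sum_distrib_left mult.assoc)
  finally show "mmult I (mmult I A B) C a b = mmult I A (mmult I B C) a b" .
qed

lemma mtransp_mmult: "mtransp (mmult I A B) = mmult I (mtransp B) (mtransp A)"
  by (simp add: mmult_def mtransp_def fun_eq_iff mult.commute)

lemma mtransp_mtransp [simp]: "mtransp (mtransp A) = A"
  by (simp add: mtransp_def)

lemma mtransp_mone [simp]: "mtransp (mone I) = mone I"
  by (auto simp: mtransp_def mone_def fun_eq_iff)

lemma mdiag_one: "mdiag I (\<lambda>_. 1) = mone I"
  by (simp add: mdiag_def mone_def)

lemma msupp_mmult: "msupp I A \<Longrightarrow> msupp I B \<Longrightarrow> msupp I (mmult I A B)"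
  by (auto simp: msupp_def mmult_def)

lemma msupp_mtransp: "msupp I A \<Longrightarrow> msupp I (mtransp A)"
  by (auto simp: msupp_def mtransp_def)

lemma msupp_mone [simp]: "msupp I (mone I)"
  by (auto simp: msupp_def mone_def)

lemma msupp_mdiag [simp]: "msupp I (mdiag I f)"
  by (auto simp: msupp_def mdiag_def)

lemma msupp_UNIV [simp]: "msupp UNIV A"
  by (simp add: msupp_def)

lemma mmult_mone_left:
  assumes "finite I" "msupp I A"
  shows "mmult I (mone I) A = A"
proof (intro ext)
  fix a b
  show "mmult I (mone I) A a b = A a b"
  proof (cases "a \<in> I")
    case True
    then show ?thesis
      unfolding mmult_def by (subst sum_eq_single_nonzero[OF assms(1) True]) (auto simp: mone_def)
  next
    case False
    then show ?thesis using assms(2) by (simp add: mmult_def mone_def msupp_def)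
  qed
qed

lemma mmult_mone_right:
  assumes "finite I" "msupp I A"
  shows "mmult I A (mone I) = A"
proof (intro ext)
  fix a b
  show "mmult I A (mone I) a b = A a b"
  proof (cases "b \<in> I")
    case True
    then show ?thesis
      unfolding mmult_def by (subst sum_eq_single_nonzero[OF assms(1) True]) (auto simp: mone_def)
  next
    case False
    then show ?thesis using assms(2) by (auto simp: mmult_def mone_def msupp_def intro!: sum.neutral)
  qed
qed

lemma mmult_mdiag_mdiag:
  assumes "finite I"
  shows "mmult I (mdiag I f) (mdiag I g) = mdiag I (\<lambda>k. f k * g k)"
proof (intro ext)
  fix a b
  show "mmult I (mdiag I f) (mdiag I g) a b = mdiag I (\<lambda>k. f k * g k) a b"
  proof (cases "a \<in> I")
    case True
    then show ?thesis
      unfolding mmult_def by (subst sum_eq_single_nonzero[OF assms True]) (auto simp: mdiag_def)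
  next
    case False
    then show ?thesis by (simp add: mmult_def mdiag_def)
  qed
qed

lemma mtrace_mmult_commute: "mtrace I (mmult I A B) = mtrace I (mmult I B A)"
  unfolding mtrace_def mmult_def by (subst sum.swap) (simp add: mult.commute)

lemma mvmult_mmult: "mvmult I (mmult I A B) v = mvmult I A (mvmult I B v)"
proof (intro ext)
  fix a
  have "mvmult I (mmult I A B) v a = (\<Sum>b\<in>I. \<Sum>c\<in>I. A a c * B c b * v b)"
    by (simp add: mvmult_def mmult_def sum_distrib_right)
  also have "\<dots> = (\<Sum>c\<in>I. \<Sum>b\<in>I. A a c * B c b * v b)"
    by (rule sum.swap)
  also have "\<dots> = mvmult I A (mvmult I B v) a"
    by (simp add: mvmult_def sum_distrib_left mult.assoc)
  finally show "mvmult I (mmult I A B) v a = mvmult I A (mvmult I B v) a" .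
qed

lemma mvmult_scale: "mvmult I A (\<lambda>a. c * v a) = (\<lambda>a. c * mvmult I A v a)"
  by (simp add: mvmult_def sum_distrib_left mult_ac)

lemma mvmult_diff: "mvmult I A (\<lambda>a. v a - w a) = (\<lambda>a. mvmult I A v a - mvmult I A w a)"
  by (simp add: mvmult_def sum_subtractf algebra_simps)

lemma qform_eq_sum_mvmult: "qform I A v = (\<Sum>a\<in>I. v a * mvmult I A v a)"
  by (simp add: qform_def mvmult_def sum_distrib_left mult.assoc)

lemma qform_add: "qform I (\<lambda>a b. A a b + B a b) v = qform I A v + qform I B v"
  by (simp add: qform_def algebra_simps sum.distrib)

lemma sum_mvmult_symmetric:
  assumes "mtransp S = S"
  shows "(\<Sum>a\<in>I. v a * mvmult I S w a) = (\<Sum>a\<in>I. mvmult I S v a * w a)"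
proof -
  have S: "S a b = S b a" for a b
    using fun_cong[OF fun_cong[OF assms], of a b] by (simp add: mtransp_def)
  have "(\<Sum>a\<in>I. v a * mvmult I S w a) = (\<Sum>a\<in>I. \<Sum>b\<in>I. v a * S a b * w b)"
    by (simp add: mvmult_def sum_distrib_left mult.assoc)
  also have "\<dots> = (\<Sum>b\<in>I. \<Sum>a\<in>I. v a * S a b * w b)"
    by (rule sum.swap)
  also have "\<dots> = (\<Sum>b\<in>I. mvmult I S v b * w b)"
    by (simp add: mvmult_def sum_distrib_left sum_distrib_right S mult_ac)
  finally show ?thesis .
qed

lemma qform_congruence:
  assumes "mtransp S = S"
  shows "qform I (mmult I (mmult I S A) S) v = qform I A (mvmult I S v)"
  using sum_mvmult_symmetric[OF assms, where w = "mvmult I A (mvmult I S v)"]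
  by (simp add: qform_eq_sum_mvmult mvmult_mmult)

lemma morth_mone: "finite I \<Longrightarrow> morth I (mone I)"
  by (simp add: morth_def mmult_mone_left)

lemma morth_mmult:
  assumes "finite I" "morth I Q" "morth I G"
  shows "morth I (mmult I Q G)"
proof -
  have sQ: "msupp I Q" and sG: "msupp I G"
    using assms by (auto simp: morth_def)
  have "mmult I (mtransp (mmult I Q G)) (mmult I Q G) = mmult I (mtransp G) (mmult I (mmult I (mtransp Q) Q) G)"
    by (simp add: mtransp_mmult mmult_assoc)
  also have "\<dots> = mone I"
    using assms sG by (simp add: morth_def mmult_mone_left)
  finally have left: "mmult I (mtransp (mmult I Q G)) (mmult I Q G) = mone I" .
  have "mmult I (mmult I Q G) (mtransp (mmult I Q G)) = mmult I Q (mmult I (mmult I G (mtransp G)) (mtransp Q))"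
    by (simp add: mtransp_mmult mmult_assoc)
  also have "\<dots> = mone I"
    using assms msupp_mtransp[OF sQ] by (simp add: morth_def mmult_mone_left)
  finally show ?thesis
    using left msupp_mmult[OF sQ sG] by (simp add: morth_def)
qed

lemma morth_columns:
  assumes "morth I Q" "j \<in> I" "k \<in> I"
  shows "(\<Sum>a\<in>I. Q a j * Q a k) = (if j = k then 1 else 0)"
  using fun_cong[OF fun_cong[OF conjunct1[OF conjunct2[OF assms(1)[unfolded morth_def]]]], of j k] assms(2,3)
  by (auto simp: mmult_def mtransp_def mone_def)

lemma morth_rows:
  assumes "morth I Q" "j \<in> I" "k \<in> I"
  shows "(\<Sum>a\<in>I. Q j a * Q k a) = (if j = k then 1 else 0)"
  using fun_cong[OF fun_cong[OF conjunct2[OF conjunct2[OF assms(1)[unfolded morth_def]]]], of j k] assms(2,3)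
  by (auto simp: mmult_def mtransp_def mone_def)

lemma spectral_mat_apply:
  assumes "finite I"
  shows "spectral_mat I Q f a b = (\<Sum>k\<in>I. Q a k * f k * Q b k)"
proof -
  have "spectral_mat I Q f a b = (\<Sum>c\<in>I. (\<Sum>k\<in>I. Q a k * mdiag I f k c) * Q b c)"
    by (simp add: spectral_mat_def mmult_def mtransp_def)
  also have "\<dots> = (\<Sum>c\<in>I. Q a c * f c * Q b c)"
  proof (rule sum.cong[OF refl])
    fix c assume c: "c \<in> I"
    have "(\<Sum>k\<in>I. Q a k * mdiag I f k c) = Q a c * f c"
      by (subst sum_eq_single_nonzero[OF assms c]) (auto simp: mdiag_def c)
    then show "(\<Sum>k\<in>I. Q a k * mdiag I f k c) * Q b c = Q a c * f c * Q b c"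
      by simp
  qed
  finally show ?thesis .
qed

lemma spectral_mat_cong:
  "finite I \<Longrightarrow> (\<And>k. k \<in> I \<Longrightarrow> f k = g k) \<Longrightarrow> spectral_mat I Q f = spectral_mat I Q g"
  by (simp add: spectral_mat_apply fun_eq_iff)

lemma msupp_spectral_mat: "finite I \<Longrightarrow> morth I Q \<Longrightarrow> msupp I (spectral_mat I Q f)"
  by (auto simp: msupp_def morth_def spectral_mat_apply)

lemma mtransp_spectral_mat: "finite I \<Longrightarrow> mtransp (spectral_mat I Q f) = spectral_mat I Q f"
  by (auto simp: mtransp_def spectral_mat_apply fun_eq_iff mult.commute mult.left_commute)

lemma spectral_mat_mult:
  assumes "finite I" "morth I Q"
  shows "mmult I (spectral_mat I Q f) (spectral_mat I Q g) = spectral_mat I Q (\<lambda>k. f k * g k)"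
proof -
  have "mmult I (spectral_mat I Q f) (spectral_mat I Q g)
      = mmult I (mmult I Q (mmult I (mdiag I f) (mmult I (mmult I (mtransp Q) Q) (mdiag I g)))) (mtransp Q)"
    unfolding spectral_mat_def by (simp add: mmult_assoc)
  also have "\<dots> = spectral_mat I Q (\<lambda>k. f k * g k)"
    using assms by (simp add: morth_def mmult_mone_left mmult_mdiag_mdiag spectral_mat_def)
  finally show ?thesis .
qed

lemma spectral_mat_one:
  assumes "finite I" "morth I Q"
  shows "spectral_mat I Q (\<lambda>_. 1) = mone I"
  using assms by (simp add: spectral_mat_def mdiag_one morth_def mmult_mone_right)

lemma mtrace_spectral_mat:
  assumes "finite I" "morth I Q"
  shows "mtrace I (spectral_mat I Q f) = (\<Sum>k\<in>I. f k)"
proof -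
  have "mtrace I (spectral_mat I Q f) = mtrace I (mmult I (mmult I (mtransp Q) Q) (mdiag I f))"
    unfolding spectral_mat_def by (metis mmult_assoc mtrace_mmult_commute)
  also have "mmult I (mmult I (mtransp Q) Q) (mdiag I f) = mdiag I f"
    using assms by (simp add: morth_def mmult_mone_left msupp_def mdiag_def)
  finally show ?thesis
    by (simp add: mtrace_def mdiag_def)
qed

lemma qform_spectral_mat:
  assumes "finite I"
  shows "qform I (spectral_mat I Q f) v = (\<Sum>k\<in>I. f k * (\<Sum>a\<in>I. Q a k * v a)\<^sup>2)"
proof -
  have "qform I (spectral_mat I Q f) v = (\<Sum>a\<in>I. \<Sum>b\<in>I. \<Sum>k\<in>I. v a * Q a k * f k * Q b k * v b)"
    by (simp add: qform_def spectral_mat_apply[OF assms] sum_distrib_left sum_distrib_right mult.assoc)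
  also have "\<dots> = (\<Sum>k\<in>I. \<Sum>a\<in>I. \<Sum>b\<in>I. v a * Q a k * f k * Q b k * v b)"
    by (subst sum.swap) (rule sum.cong[OF refl], rule sum.swap)
  also have "\<dots> = (\<Sum>k\<in>I. f k * (\<Sum>a\<in>I. Q a k * v a)\<^sup>2)"
    by (simp add: power2_eq_square sum_distrib_left sum_distrib_right mult_ac)
  finally show ?thesis .
qed

lemma mvmult_spectral_mat_column:
  assumes "finite I" "morth I Q" "k \<in> I"
  shows "mvmult I (spectral_mat I Q f) (\<lambda>a. Q a k) = (\<lambda>a. f k * Q a k)"
proof
  fix a
  have "mvmult I (spectral_mat I Q f) (\<lambda>a. Q a k) a = (\<Sum>b\<in>I. \<Sum>j\<in>I. Q a j * f j * Q b j * Q b k)"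
    by (simp add: mvmult_def spectral_mat_apply[OF assms(1)] sum_distrib_right)
  also have "\<dots> = (\<Sum>j\<in>I. Q a j * f j * (\<Sum>b\<in>I. Q b j * Q b k))"
    by (subst sum.swap) (simp add: sum_distrib_left mult.assoc)
  also have "\<dots> = (\<Sum>j\<in>I. Q a j * f j * (if j = k then 1 else 0))"
    by (rule sum.cong[OF refl]) (simp add: morth_columns[OF assms(2) _ assms(3)])
  also have "\<dots> = f k * Q a k"
    by (subst sum_eq_single_nonzero[OF assms(1,3)]) auto
  finally show "mvmult I (spectral_mat I Q f) (\<lambda>a. Q a k) a = f k * Q a k" .
qed

lemma qform_spectral_mat_column:
  assumes "finite I" "morth I Q" "k \<in> I"
  shows "qform I (spectral_mat I Q f) (\<lambda>a. Q a k) = f k"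
proof -
  have "qform I (spectral_mat I Q f) (\<lambda>a. Q a k) = (\<Sum>a\<in>I. Q a k * (f k * Q a k))"
    by (simp add: qform_eq_sum_mvmult mvmult_spectral_mat_column[OF assms])
  also have "\<dots> = f k * (\<Sum>a\<in>I. Q a k * Q a k)"
    by (simp add: sum_distrib_left mult_ac)
  finally show ?thesis
    by (simp add: morth_columns[OF assms(2,3,3)])
qed

lemma morth_column_nonzero:
  assumes "morth I Q" "k \<in> I"
  shows "\<exists>a\<in>I. Q a k \<noteq> 0"
  using morth_columns[OF assms(1,2,2)] by (metis (no_types, lifting) mult_zero_left sum.neutral zero_neq_one)

section \<open>The spectral theorem\<close>

lemma exists_half_angle:
  fixes u v :: real
  assumes "u\<^sup>2 + v\<^sup>2 = 1"
  obtains c s where "c\<^sup>2 + s\<^sup>2 = 1" "c\<^sup>2 - s\<^sup>2 = u" "2 * c * s = v"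
proof -
  obtain t where "u = cos t" "v = sin t"
    using sincos_total_2pi[OF assms] by metis
  then show ?thesis
    using that[of "cos (t / 2)" "sin (t / 2)"] cos_double[of "t / 2"] sin_double[of "t / 2"]
    by (simp add: mult_ac)
qed

text \<open>The rotation by the half angle that diagonalises the \<open>2 \<times> 2\<close> block
  \<open>[[x, b], [b, z]]\<close> keeps the sum of the diagonal entries and increases their
  difference to \<open>sqrt ((z - x)\<^sup>2 + 4 b\<^sup>2)\<close>.\<close>

lemma exists_rotation_increasing_diagonal:
  fixes x z b :: real
  assumes b: "b \<noteq> 0"
  obtains c s where "c\<^sup>2 + s\<^sup>2 = 1"
    "x\<^sup>2 + z\<^sup>2 < (c\<^sup>2 * x - 2 * c * s * b + s\<^sup>2 * z)\<^sup>2 + (s\<^sup>2 * x + 2 * c * s * b + c\<^sup>2 * z)\<^sup>2"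
proof -
  define r where "r = sqrt ((z - x)\<^sup>2 + 4 * b\<^sup>2)"
  have pos: "0 < (z - x)\<^sup>2 + 4 * b\<^sup>2"
    using b by (simp add: add_nonneg_pos)
  then have r: "0 < r" "r\<^sup>2 = (z - x)\<^sup>2 + 4 * b\<^sup>2"
    by (simp_all add: r_def)
  have "((z - x) / r)\<^sup>2 + (2 * b / r)\<^sup>2 = ((z - x)\<^sup>2 + 4 * b\<^sup>2) / r\<^sup>2"
    by (simp add: power_divide add_divide_distrib power_mult_distrib)
  then have "((z - x) / r)\<^sup>2 + (2 * b / r)\<^sup>2 = 1"
    using r pos by simp
  then obtain c s where cs: "c\<^sup>2 + s\<^sup>2 = 1" "c\<^sup>2 - s\<^sup>2 = (z - x) / r" "2 * c * s = 2 * b / r"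
    by (rule exists_half_angle)
  define np where "np = c\<^sup>2 * x - 2 * c * s * b + s\<^sup>2 * z"
  define nq where "nq = s\<^sup>2 * x + 2 * c * s * b + c\<^sup>2 * z"
  have "np + nq = (c\<^sup>2 + s\<^sup>2) * (x + z)"
    by (simp add: np_def nq_def algebra_simps)
  then have sum: "np + nq = x + z"
    using cs(1) by simp
  have "nq - np = (c\<^sup>2 - s\<^sup>2) * (z - x) + 2 * (2 * c * s) * b"
    by (simp add: np_def nq_def algebra_simps)
  also have "\<dots> = r\<^sup>2 / r"
    using r by (simp only: cs(2,3)) (simp add: field_simps power2_eq_square)
  finally have diff: "nq - np = r"
    using r(1) by (simp add: power2_eq_square)
  have "x\<^sup>2 + z\<^sup>2 = ((x + z)\<^sup>2 + (z - x)\<^sup>2) / 2"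
    by (simp add: power2_eq_square algebra_simps)
  also have "\<dots> < ((np + nq)\<^sup>2 + (nq - np)\<^sup>2) / 2"
    using r b by (simp add: sum diff)
  also have "\<dots> = np\<^sup>2 + nq\<^sup>2"
    by (simp add: power2_eq_square algebra_simps)
  finally show ?thesis
    using that[OF cs(1)] by (simp add: np_def nq_def)
qed

definition rotation_mat :: "'a set \<Rightarrow> 'a \<Rightarrow> 'a \<Rightarrow> real \<Rightarrow> real \<Rightarrow> 'a fmat" where
  "rotation_mat I p q c s = (\<lambda>a b. if a \<in> I \<and> b \<in> I then
     (if a = p \<and> b = p then c else if a = q \<and> b = q then c else if a = p \<and> b = q then s
      else if a = q \<and> b = p then - s else if a = b then 1 else 0) else 0)"

lemma sum_split_pair:
  fixes f :: "'a \<Rightarrow> real"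
  assumes "finite I" "p \<in> I" "q \<in> I" "p \<noteq> q"
  shows "sum f I = f p + f q + sum f (I - {p, q})"
proof -
  have "sum f I = sum f (I - {p, q}) + sum f {p, q}"
    by (rule sum.subset_diff) (use assms in auto)
  then show ?thesis
    using assms by simp
qed

lemma rotation_mat_pair:
  assumes "p \<in> I" "q \<in> I" "p \<noteq> q"
  shows "rotation_mat I p q c s p p = c" "rotation_mat I p q c s q q = c"
    "rotation_mat I p q c s p q = s" "rotation_mat I p q c s q p = - s"
  using assms by (simp_all add: rotation_mat_def)

lemma rotation_mat_off_pair:
  assumes "k \<noteq> p" "k \<noteq> q"
  shows "rotation_mat I p q c s k a = (if k \<in> I \<and> a = k then 1 else 0)"
    and "rotation_mat I p q c s a k = (if k \<in> I \<and> a = k then 1 else 0)"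
  using assms by (auto simp: rotation_mat_def)

lemma msupp_rotation_mat: "msupp I (rotation_mat I p q c s)"
proof -
  have "rotation_mat I p q c s a b = 0" if "a \<notin> I \<or> b \<notin> I" for a b
  proof -
    from that have "(a \<in> I \<and> b \<in> I) = False"
      by blast
    then show ?thesis
      unfolding rotation_mat_def by (simp only: if_False)
  qed
  then show ?thesis
    by (simp add: msupp_def)
qed

lemma morth_rotation_mat:
  assumes I: "finite I" "p \<in> I" "q \<in> I" "p \<noteq> q" and cs: "c\<^sup>2 + s\<^sup>2 = 1"
  shows "morth I (rotation_mat I p q c s)"
proof -
  let ?G = "rotation_mat I p q c s"
  have cs': "c * c + s * s = 1"
    using cs by (simp add: power2_eq_square)
  have rest: "(\<Sum>k\<in>I - {p, q}. ?G k a * ?G k b) = (if a \<in> I - {p, q} \<and> b = a then 1 else 0)"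
    "(\<Sum>k\<in>I - {p, q}. ?G a k * ?G b k) = (if a \<in> I - {p, q} \<and> b = a then 1 else 0)" for a b
  proof -
    have "(\<Sum>k\<in>I - {p, q}. ?G k a * ?G k b) = (\<Sum>k\<in>I - {p, q}. if k = a then (if b = a then 1 else 0) else 0)"
      "(\<Sum>k\<in>I - {p, q}. ?G a k * ?G b k) = (\<Sum>k\<in>I - {p, q}. if k = a then (if b = a then 1 else 0) else 0)"
      by (intro sum.cong refl; auto simp: rotation_mat_off_pair)+
    then show "(\<Sum>k\<in>I - {p, q}. ?G k a * ?G k b) = (if a \<in> I - {p, q} \<and> b = a then 1 else 0)"
      "(\<Sum>k\<in>I - {p, q}. ?G a k * ?G b k) = (if a \<in> I - {p, q} \<and> b = a then 1 else 0)"
      using I(1) by (simp_all add: sum.delta)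
  qed
  have sums: "(\<Sum>k\<in>I. ?G k a * ?G k b) = mone I a b \<and> (\<Sum>k\<in>I. ?G a k * ?G b k) = mone I a b" for a b
  proof (cases "a \<in> {p, q} \<and> b \<in> {p, q}")
    case True
    then show ?thesis
      unfolding sum_split_pair[OF I] rest using I cs' by (auto simp: rotation_mat_pair mone_def)
  next
    case False
    then show ?thesis
      unfolding sum_split_pair[OF I] rest by (auto simp: rotation_mat_off_pair mone_def)
  qed
  with msupp_rotation_mat show ?thesis
    by (simp add: morth_def mmult_def mtransp_def fun_eq_iff)
qed

lemma continuous_on_fmat_entry: "continuous_on S (\<lambda>Q :: 'a fmat. Q a b)"
  by (rule continuous_on_subset[OF continuous_on_product_then_coordinatewise[OF continuous_on_product_coordinates]]) auto

lemma compact_fmat_entries_in: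
  fixes K :: "real set"
  assumes "compact K"
  shows "compact {Q :: 'a fmat. \<forall>a b. Q a b \<in> K}"
proof -
  have rows: "compact {f :: 'a \<Rightarrow> real. \<forall>b. f b \<in> K}"
  proof -
    have "{f :: 'a \<Rightarrow> real. \<forall>b. f b \<in> K} = PiE UNIV (\<lambda>_. K)"
      by (auto simp: PiE_def Pi_def extensional_def)
    moreover have "compactin (product_topology (\<lambda>_. euclidean) UNIV) (PiE UNIV (\<lambda>_::'a. K))"
      using assms by (simp add: compactin_PiE)
    ultimately show ?thesis
      by (simp add: euclidean_product_topology)
  qed
  have "{Q :: 'a fmat. \<forall>a b. Q a b \<in> K} = PiE UNIV (\<lambda>_. {f. \<forall>b. f b \<in> K})"
    by (auto simp: PiE_def Pi_def extensional_def)
  moreover have "compactin (product_topology (\<lambda>_. euclidean) UNIV)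
      (PiE UNIV (\<lambda>_::'a. {f :: 'a \<Rightarrow> real. \<forall>b. f b \<in> K}))"
    using rows by (simp add: compactin_PiE)
  ultimately show ?thesis
    by (simp add: euclidean_product_topology)
qed

lemma compact_morth:
  assumes "finite I"
  shows "compact {Q. morth I Q}"
proof -
  have bounded: "{Q. morth I Q} \<subseteq> {Q. \<forall>a b. Q a b \<in> {-1..1}}"
  proof clarify
    fix Q a b
    assume Q: "morth I Q"
    show "Q a b \<in> {-1..1}"
    proof (cases "a \<in> I \<and> b \<in> I")
      case True
      have "(Q a b)\<^sup>2 \<le> (\<Sum>k\<in>I. (Q a k)\<^sup>2)"
        by (rule member_le_sum) (use True assms in auto)
      also have "\<dots> = 1"
        using morth_rows[OF Q, of a a] True by (simp add: power2_eq_square)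
      finally show ?thesis
        by (simp add: abs_square_le_1 abs_le_iff)
    next
      case False
      then show ?thesis using Q by (auto simp: morth_def msupp_def)
    qed
  qed
  have eq: "{Q. morth I Q} = {Q. \<forall>a b. (a \<notin> I \<or> b \<notin> I) \<longrightarrow> Q a b = 0} \<inter>
     {Q. \<forall>a b. (\<Sum>c\<in>I. Q c a * Q c b) = mone I a b} \<inter> {Q. \<forall>a b. (\<Sum>c\<in>I. Q a c * Q b c) = mone I a b}"
    by (auto simp: morth_def msupp_def mmult_def mtransp_def fun_eq_iff)
  have "closed {Q :: 'a fmat. (a \<notin> I \<or> b \<notin> I) \<longrightarrow> Q a b = 0}" for a b
    by (cases "a \<notin> I \<or> b \<notin> I") (simp_all add: closed_Collect_eq continuous_on_fmat_entry)
  then have closed: "closed {Q. morth I Q}"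
    unfolding eq by (intro closed_Int closed_Collect_all closed_Collect_eq continuous_intros continuous_on_fmat_entry)
  have "compact {Q :: 'a fmat. \<forall>a b. Q a b \<in> {-1..1}}"
    by (rule compact_fmat_entries_in) simp
  then have "compact ({Q :: 'a fmat. \<forall>a b. Q a b \<in> {-1..1}} \<inter> {Q. morth I Q})"
    using closed by (rule compact_Int_closed)
  then show ?thesis
    using bounded by (simp add: Int_absorb1)
qed

lemma diagonal_rotation_conjugate:
  fixes c s :: real
  assumes I: "finite I" "p \<in> I" "q \<in> I" "p \<noteq> q" and B: "mtransp B = B"
  defines "G \<equiv> rotation_mat I p q c s"
  shows "\<And>i. i \<in> I \<Longrightarrow> i \<notin> {p, q} \<Longrightarrow> mmult I (mmult I (mtransp G) B) G i i = B i i"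
    and "mmult I (mmult I (mtransp G) B) G p p = c\<^sup>2 * B p p - 2 * c * s * B p q + s\<^sup>2 * B q q"
    and "mmult I (mmult I (mtransp G) B) G q q = s\<^sup>2 * B p p + 2 * c * s * B p q + c\<^sup>2 * B q q"
proof -
  have diag: "mmult I (mmult I (mtransp G) B) G i i = (\<Sum>l\<in>I. (\<Sum>k\<in>I. G k i * B k l) * G l i)" for i
    by (simp add: mmult_def mtransp_def)
  have Bs: "B q p = B p q"
    using fun_cong[OF fun_cong[OF B], of q p] by (simp add: mtransp_def)
  have sum_pair: "sum f I = f p + f q" if "\<And>k. k \<in> I - {p, q} \<Longrightarrow> f k = 0" for f :: "'a \<Rightarrow> real"
    using sum_split_pair[OF I, of f] that by simp
  show "mmult I (mmult I (mtransp G) B) G i i = B i i" if i: "i \<in> I" "i \<notin> {p, q}" for i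
  proof -
    have inner: "(\<Sum>k\<in>I. G k i * B k l) = B i l" for l
      by (subst sum_eq_single_nonzero[OF I(1) i(1)]) (use i in \<open>auto simp: G_def rotation_mat_off_pair\<close>)
    show ?thesis
      unfolding diag inner
      by (subst sum_eq_single_nonzero[OF I(1) i(1)]) (use i in \<open>auto simp: G_def rotation_mat_off_pair\<close>)
  qed
  have inner_p: "(\<Sum>k\<in>I. G k p * B k l) = c * B p l - s * B q l" for l
    by (subst sum_pair) (use I in \<open>auto simp: G_def rotation_mat_pair rotation_mat_off_pair\<close>)
  have inner_q: "(\<Sum>k\<in>I. G k q * B k l) = s * B p l + c * B q l" for l
    by (subst sum_pair) (use I in \<open>auto simp: G_def rotation_mat_pair rotation_mat_off_pair\<close>)
  have "mmult I (mmult I (mtransp G) B) G p p = (c * B p p - s * B q p) * c + (c * B p q - s * B q q) * (- s)"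
    unfolding diag inner_p by (subst sum_pair) (use I in \<open>auto simp: G_def rotation_mat_pair rotation_mat_off_pair\<close>)
  then show "mmult I (mmult I (mtransp G) B) G p p = c\<^sup>2 * B p p - 2 * c * s * B p q + s\<^sup>2 * B q q"
    by (simp add: Bs power2_eq_square algebra_simps)
  have "mmult I (mmult I (mtransp G) B) G q q = (s * B p p + c * B q p) * s + (s * B p q + c * B q q) * c"
    unfolding diag inner_q by (subst sum_pair) (use I in \<open>auto simp: G_def rotation_mat_pair rotation_mat_off_pair\<close>)
  then show "mmult I (mmult I (mtransp G) B) G q q = s\<^sup>2 * B p p + 2 * c * s * B p q + c\<^sup>2 * B q q"
    by (simp add: Bs power2_eq_square algebra_simps)
qed

lemma jacobi_rotation_step:
  assumes I: "finite I" "p \<in> I" "q \<in> I" "p \<noteq> q" and B: "mtransp B = B" "B p q \<noteq> 0"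
  obtains G where "morth I G"
    "(\<Sum>i\<in>I. (B i i)\<^sup>2) < (\<Sum>i\<in>I. (mmult I (mmult I (mtransp G) B) G i i)\<^sup>2)"
proof -
  obtain c s where cs: "c\<^sup>2 + s\<^sup>2 = 1" and
    gt: "(B p p)\<^sup>2 + (B q q)\<^sup>2 < (c\<^sup>2 * B p p - 2 * c * s * B p q + s\<^sup>2 * B q q)\<^sup>2 +
      (s\<^sup>2 * B p p + 2 * c * s * B p q + c\<^sup>2 * B q q)\<^sup>2"
    using B(2) by (rule exists_rotation_increasing_diagonal)
  define G where "G = rotation_mat I p q c s"
  note diag = diagonal_rotation_conjugate[OF I B(1), where c = c and s = s, folded G_def]
  have "(\<Sum>i\<in>I. (B i i)\<^sup>2) = (B p p)\<^sup>2 + (B q q)\<^sup>2 + (\<Sum>i\<in>I - {p, q}. (B i i)\<^sup>2)"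
    by (rule sum_split_pair[OF I])
  also have "\<dots> < (\<Sum>i\<in>I. (mmult I (mmult I (mtransp G) B) G i i)\<^sup>2)"
    using gt by (simp add: sum_split_pair[OF I] diag)
  finally show ?thesis
    using that morth_rotation_mat[OF I cs] by (simp add: G_def)
qed

text \<open>Jacobi's argument: among all orthogonal conjugates of \<open>A\<close>, one maximising the sum of
  the squared diagonal entries exists by compactness, and by \<open>jacobi_rotation_step\<close> it is
  diagonal.\<close>

theorem symmetric_spectral_decomposition:
  assumes I: "finite I" and A: "msupp I A" "mtransp A = A"
  obtains Q f where "morth I Q" "A = spectral_mat I Q f"
proof -
  define D where "D Q = mmult I (mmult I (mtransp Q) A) Q" for Q
  define F where "F Q = (\<Sum>i\<in>I. (D Q i i)\<^sup>2)" for Q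
  have "continuous_on {Q. morth I Q} F"
    unfolding F_def D_def mmult_def mtransp_def by (intro continuous_intros continuous_on_fmat_entry)
  then obtain Q0 where Q0: "morth I Q0" and max: "\<And>Q. morth I Q \<Longrightarrow> F Q \<le> F Q0"
    using continuous_attains_sup[OF compact_morth[OF I]] morth_mone[OF I] by blast
  define B where "B = D Q0"
  have sB: "msupp I B"
    using Q0 A(1) unfolding B_def D_def morth_def by (intro msupp_mmult msupp_mtransp) auto
  have tB: "mtransp B = B"
    unfolding B_def D_def by (simp add: mtransp_mmult A(2) mmult_assoc)
  have off_diagonal: "B p q = 0" if pq: "p \<in> I" "q \<in> I" "p \<noteq> q" for p q
  proof (rule ccontr)
    assume "B p q \<noteq> 0"
    then obtain G where G: "morth I G" and gt: "F Q0 < (\<Sum>i\<in>I. (mmult I (mmult I (mtransp G) B) G i i)\<^sup>2)"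
      using jacobi_rotation_step[OF I pq tB] unfolding F_def B_def by blast
    have "D (mmult I Q0 G) = mmult I (mmult I (mtransp G) B) G"
      unfolding B_def D_def by (simp add: mtransp_mmult mmult_assoc)
    then have "F Q0 < F (mmult I Q0 G)"
      using gt by (simp add: F_def)
    then show False
      using max[OF morth_mmult[OF I Q0 G]] by simp
  qed
  have "B = mdiag I (\<lambda>k. B k k)"
    using sB off_diagonal unfolding mdiag_def msupp_def fun_eq_iff by metis
  moreover have "mmult I (mmult I Q0 B) (mtransp Q0) = A"
  proof -
    have "mmult I (mmult I Q0 B) (mtransp Q0) = mmult I (mmult I (mmult I Q0 (mtransp Q0)) A) (mmult I Q0 (mtransp Q0))"
      unfolding B_def D_def by (simp add: mmult_assoc)
    also have "\<dots> = A"
      using Q0 I A(1) by (simp add: morth_def mmult_mone_left mmult_mone_right)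
    finally show ?thesis .
  qed
  ultimately have "A = spectral_mat I Q0 (\<lambda>k. B k k)"
    unfolding spectral_mat_def by simp
  with Q0 show ?thesis
    by (rule that)
qed

lemma pd_on_spectral_decomposition:
  assumes I: "finite I" and X: "msupp I X" "mtransp X = X" "pd_on I X"
  obtains Q f where "morth I Q" "\<And>k. k \<in> I \<Longrightarrow> 0 < f k" "X = spectral_mat I Q f"
proof -
  obtain Q f where Q: "morth I Q" and Xf: "X = spectral_mat I Q f"
    using symmetric_spectral_decomposition[OF I X(1,2)] by blast
  have "0 < f k" if k: "k \<in> I" for k
    using X(3) morth_column_nonzero[OF Q k] qform_spectral_mat_column[OF I Q k, of f]
    unfolding pd_on_def Xf by metis
  then show ?thesis
    using Q Xf that by blast
qed

section \<open>Positive definite matrices\<close>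

lemma spectral_mat_mult_eq:
  assumes "finite I" "morth I Q" "\<And>k. k \<in> I \<Longrightarrow> f k * g k = h k"
  shows "mmult I (spectral_mat I Q f) (spectral_mat I Q g) = spectral_mat I Q h"
  using spectral_mat_mult[OF assms(1,2)] spectral_mat_cong[OF assms(1), of "\<lambda>k. f k * g k" h] assms(3)
  by simp

lemma minverse_unique:
  assumes "finite I" "minverse I A B" "minverse I A C"
  shows "B = C"
proof -
  have "B = mmult I B (mmult I A C)"
    using assms by (simp add: minverse_def mmult_mone_right)
  also have "\<dots> = mmult I (mmult I B A) C"
    by (simp add: mmult_assoc)
  also have "\<dots> = C"
    using assms by (simp add: minverse_def mmult_mone_left)
  finally show ?thesis .
qed

lemma minverse_spectral_mat:
  assumes "finite I" "morth I Q" "\<And>k. k \<in> I \<Longrightarrow> f k \<noteq> 0"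
  shows "minverse I (spectral_mat I Q f) (spectral_mat I Q (\<lambda>k. 1 / f k))"
proof -
  have "mmult I (spectral_mat I Q f) (spectral_mat I Q (\<lambda>k. 1 / f k)) = spectral_mat I Q (\<lambda>_. 1)"
    "mmult I (spectral_mat I Q (\<lambda>k. 1 / f k)) (spectral_mat I Q f) = spectral_mat I Q (\<lambda>_. 1)"
    using assms by (auto intro: spectral_mat_mult_eq)
  then show ?thesis
    using assms by (simp add: minverse_def msupp_spectral_mat spectral_mat_one)
qed

lemma pd_on_minverse_exists:
  assumes I: "finite I" and X: "msupp I X" "mtransp X = X" "pd_on I X"
  shows "\<exists>B. minverse I X B"
proof -
  obtain Q f where Q: "morth I Q" and f: "\<And>k. k \<in> I \<Longrightarrow> 0 < f k" and Xf: "X = spectral_mat I Q f"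
    using pd_on_spectral_decomposition[OF I X] by blast
  have "minverse I X (spectral_mat I Q (\<lambda>k. 1 / f k))"
    unfolding Xf by (rule minverse_spectral_mat[OF I Q]) (use f in fastforce)
  then show ?thesis
    by blast
qed

lemma nonneg_if_sum_sq_bound:
  fixes \<mu> :: "'a \<Rightarrow> real"
  assumes K: "finite K" and bound: "(real (card K) - 1) * (\<Sum>k\<in>K. (\<mu> k)\<^sup>2) \<le> (\<Sum>k\<in>K. \<mu> k)\<^sup>2"
    and pos: "0 < (\<Sum>k\<in>K. \<mu> k)" and j: "j \<in> K"
  shows "0 \<le> \<mu> j"
proof (rule ccontr)
  assume "\<not> 0 \<le> \<mu> j"
  then have neg: "\<mu> j < 0" by simp
  define S where "S = (\<Sum>k\<in>K - {j}. \<mu> k)"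
  define T where "T = (\<Sum>k\<in>K - {j}. (\<mu> k)\<^sup>2)"
  have "0 < card K"
    using K j by (auto simp: card_gt_0_iff)
  then have card: "real (card K) - 1 = real (card (K - {j}))"
    using K j by (simp add: of_nat_diff card_Diff_singleton)
  have sums: "(\<Sum>k\<in>K. \<mu> k) = \<mu> j + S" "(\<Sum>k\<in>K. (\<mu> k)\<^sup>2) = (\<mu> j)\<^sup>2 + T"
    unfolding S_def T_def using K j by (simp_all add: sum.remove)
  have cauchy_schwarz: "S\<^sup>2 \<le> T * real (card (K - {j}))"
    unfolding S_def T_def by (rule sum_squared_le_sum_of_squares)
  have S: "0 < S"
    using pos neg sums by simp
  have "real (card (K - {j})) * (\<mu> j)\<^sup>2 + S\<^sup>2 \<le> (\<mu> j + S)\<^sup>2"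
    using bound cauchy_schwarz unfolding card sums by (simp add: algebra_simps)
  then have "real (card (K - {j})) * (\<mu> j)\<^sup>2 \<le> (\<mu> j)\<^sup>2 + 2 * (\<mu> j * S)"
    by (simp add: power2_eq_square algebra_simps)
  moreover have "\<mu> j * S < 0"
    using neg S by (simp add: mult_neg_pos)
  ultimately have "real (card (K - {j})) * (\<mu> j)\<^sup>2 < 1 * (\<mu> j)\<^sup>2"
    by simp
  then have "card (K - {j}) = 0"
    by (subst (asm) mult_less_cancel_right) auto
  then have "K - {j} = {}"
    using K by simp
  then have "S = 0"
    unfolding S_def by (simp only: sum.empty)
  with S show False
    by simp
qed

lemma mtrace_square_root_congruence:
  assumes "mmult I R R = B"
  shows "mtrace I (mmult I B Y) = mtrace I (mmult I (mmult I R Y) R)"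
    and "mtrace I (mmult I (mmult I B Y) (mmult I B Y))
      = mtrace I (mmult I (mmult I (mmult I R Y) R) (mmult I (mmult I R Y) R))"
proof -
  show "mtrace I (mmult I B Y) = mtrace I (mmult I (mmult I R Y) R)"
    by (simp add: mmult_assoc mtrace_mmult_commute[of I R] flip: assms)
  have "mtrace I (mmult I (mmult I B Y) (mmult I B Y))
      = mtrace I (mmult I R (mmult I (mmult I R Y) (mmult I R (mmult I R Y))))"
    by (simp add: mmult_assoc flip: assms)
  also have "\<dots> = mtrace I (mmult I (mmult I (mmult I R Y) R) (mmult I (mmult I R Y) R))"
    by (subst mtrace_mmult_commute) (simp add: mmult_assoc)
  finally show "mtrace I (mmult I (mmult I B Y) (mmult I B Y))
      = mtrace I (mmult I (mmult I (mmult I R Y) R) (mmult I (mmult I R Y) R))" .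
qed

context
  fixes I :: "'a set" and X B :: "'a fmat"
  assumes I: "finite I"
    and X: "msupp I X" "mtransp X = X" "pd_on I X"
    and B: "minverse I X B"
begin

lemma pd_on_inverse_square_root:
  obtains R S where "mtransp R = R" "msupp I R" "psd_on I R" "mtransp S = S" "msupp I S"
    "mmult I R R = B" "mmult I S R = mone I" "mmult I R S = mone I" "mmult I S S = X"
proof -
  obtain Q f where Q: "morth I Q" and f: "\<And>k. k \<in> I \<Longrightarrow> 0 < f k" and Xf: "X = spectral_mat I Q f"
    using pd_on_spectral_decomposition[OF I X] by blast
  define R where "R = spectral_mat I Q (\<lambda>k. 1 / sqrt (f k))"
  define S where "S = spectral_mat I Q (\<lambda>k. sqrt (f k))"
  have "minverse I X (spectral_mat I Q (\<lambda>k. 1 / f k))"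
    unfolding Xf by (rule minverse_spectral_mat[OF I Q]) (use f in fastforce)
  then have "B = spectral_mat I Q (\<lambda>k. 1 / f k)"
    by (rule minverse_unique[OF I B])
  also have "\<dots> = mmult I R R"
    unfolding R_def by (rule spectral_mat_mult_eq[symmetric, OF I Q]) (use f in \<open>simp add: abs_of_pos\<close>)
  finally have RR: "mmult I R R = B" ..
  have SR: "mmult I S R = mone I" and RS: "mmult I R S = mone I"
    unfolding R_def S_def spectral_mat_one[OF I Q, symmetric]
    by (rule spectral_mat_mult_eq[OF I Q]; use f in \<open>simp add: less_imp_neq[symmetric]\<close>)+
  have SS: "mmult I S S = X"
    unfolding S_def Xf by (rule spectral_mat_mult_eq[OF I Q]) (use f in \<open>simp add: abs_of_pos\<close>)
  have "psd_on I R"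
    unfolding psd_on_def R_def qform_spectral_mat[OF I] using f by (auto intro!: sum_nonneg divide_nonneg_pos)
  show ?thesis
    by (rule that[OF _ _ \<open>psd_on I R\<close> _ _ RR SR RS SS])
      (simp_all add: R_def S_def mtransp_spectral_mat[OF I] msupp_spectral_mat[OF I Q])
qed

text \<open>Simultaneous diagonalisation of \<open>X\<close> and \<open>Y\<close>: with \<open>R = X^(-1/2)\<close> and \<open>S = X^(1/2)\<close>,
  the \<open>\<mu> k\<close> are the eigenvalues of \<open>R Y R\<close> and \<open>w v\<close> are the coordinates of \<open>S v\<close> in
  its eigenbasis.\<close>

lemma simultaneous_diagonalization:
  assumes Y: "msupp I Y" "mtransp Y = Y"
  obtains w \<mu> where
    "\<And>v. qform I X v = (\<Sum>k\<in>I. (w v k)\<^sup>2)"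
    "\<And>v. qform I Y v = (\<Sum>k\<in>I. \<mu> k * (w v k)\<^sup>2)"
    "mtrace I (mmult I B Y) = (\<Sum>k\<in>I. \<mu> k)"
    "mtrace I (mmult I (mmult I B Y) (mmult I B Y)) = (\<Sum>k\<in>I. (\<mu> k)\<^sup>2)"
proof -
  obtain R S where R: "mtransp R = R" "msupp I R" "psd_on I R" and S: "mtransp S = S" "msupp I S"
    and RR: "mmult I R R = B" and SR: "mmult I S R = mone I" and RS: "mmult I R S = mone I"
    and SS: "mmult I S S = X"
    by (rule pd_on_inverse_square_root)
  define Z where "Z = mmult I (mmult I R Y) R"
  have "msupp I Z" "mtransp Z = Z"
    unfolding Z_def using R Y by (simp_all add: msupp_mmult mtransp_mmult mmult_assoc)
  then obtain P \<mu> where P: "morth I P" and Z: "Z = spectral_mat I P \<mu>"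
    by (rule symmetric_spectral_decomposition[OF I])
  define w where "w v k = (\<Sum>a\<in>I. P a k * mvmult I S v a)" for v k
  have "mmult I (mmult I S Z) S = mmult I (mmult I (mmult I S R) Y) (mmult I R S)"
    by (simp add: Z_def mmult_assoc)
  then have "Y = mmult I (mmult I S Z) S"
    using Y(1) by (simp add: SR RS I mmult_mone_left mmult_mone_right)
  then have "qform I Y v = (\<Sum>k\<in>I. \<mu> k * (w v k)\<^sup>2)" for v
    by (simp add: qform_congruence[OF S(1)] Z qform_spectral_mat[OF I] w_def)
  moreover have "qform I X v = (\<Sum>k\<in>I. (w v k)\<^sup>2)" for v
  proof -
    have "X = mmult I (mmult I S (spectral_mat I P (\<lambda>_. 1))) S"
      using SS S(2) by (simp add: spectral_mat_one[OF I P] mmult_mone_right[OF I])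
    then show ?thesis
      by (simp add: qform_congruence[OF S(1)] qform_spectral_mat[OF I] w_def)
  qed
  moreover have "mtrace I (mmult I B Y) = mtrace I Z"
    "mtrace I (mmult I (mmult I B Y) (mmult I B Y)) = mtrace I (mmult I Z Z)"
    unfolding Z_def by (rule mtrace_square_root_congruence[OF RR])+
  ultimately show ?thesis
    using that[of w \<mu>] by (simp add: Z spectral_mat_mult[OF I P] mtrace_spectral_mat[OF I P] power2_eq_square)
qed

lemma psd_on_if_trace_bound:
  assumes Y: "msupp I Y" "mtransp Y = Y"
    and pos: "0 < mtrace I (mmult I B Y)"
    and bound: "(real (card I) - 1) * mtrace I (mmult I (mmult I B Y) (mmult I B Y)) \<le> (mtrace I (mmult I B Y))\<^sup>2"
  shows "psd_on I Y"
proof -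
  obtain w \<mu> where qX: "\<And>v. qform I X v = (\<Sum>k\<in>I. (w v k)\<^sup>2)"
    and qY: "\<And>v. qform I Y v = (\<Sum>k\<in>I. \<mu> k * (w v k)\<^sup>2)"
    and tr: "mtrace I (mmult I B Y) = (\<Sum>k\<in>I. \<mu> k)"
    and tr2: "mtrace I (mmult I (mmult I B Y) (mmult I B Y)) = (\<Sum>k\<in>I. (\<mu> k)\<^sup>2)"
    using simultaneous_diagonalization[OF Y] by blast
  have "0 \<le> \<mu> k" if "k \<in> I" for k
    using nonneg_if_sum_sq_bound[OF I _ _ that] pos bound by (simp add: tr tr2)
  then show ?thesis
    by (simp add: psd_on_def qY sum_nonneg)
qed

lemma psd_on_add_if_trace_sq_le_one:
  assumes Y: "msupp I Y" "mtransp Y = Y"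
    and le: "mtrace I (mmult I (mmult I B Y) (mmult I B Y)) \<le> 1"
  shows "psd_on I (\<lambda>a b. X a b + Y a b)"
proof -
  obtain w \<mu> where qX: "\<And>v. qform I X v = (\<Sum>k\<in>I. (w v k)\<^sup>2)"
    and qY: "\<And>v. qform I Y v = (\<Sum>k\<in>I. \<mu> k * (w v k)\<^sup>2)"
    and tr: "mtrace I (mmult I B Y) = (\<Sum>k\<in>I. \<mu> k)"
    and tr2: "mtrace I (mmult I (mmult I B Y) (mmult I B Y)) = (\<Sum>k\<in>I. (\<mu> k)\<^sup>2)"
    using simultaneous_diagonalization[OF Y] by blast
  have "0 \<le> 1 + \<mu> k" if k: "k \<in> I" for k
  proof -
    have "(\<mu> k)\<^sup>2 \<le> (\<Sum>k\<in>I. (\<mu> k)\<^sup>2)"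
      by (rule member_le_sum) (use k I in auto)
    then have "(\<mu> k)\<^sup>2 \<le> 1"
      using le tr2 by simp
    then have "\<bar>\<mu> k\<bar> \<le> 1"
      by (simp add: abs_square_le_1)
    then show ?thesis
      by simp
  qed
  then have "0 \<le> (\<Sum>k\<in>I. (1 + \<mu> k) * (w v k)\<^sup>2)" for v
    by (simp add: sum_nonneg)
  then show ?thesis
    by (simp add: psd_on_def qform_add qX qY algebra_simps sum.distrib)
qed

lemma trace_sq_nonneg:
  assumes Y: "msupp I Y" "mtransp Y = Y"
  shows "0 \<le> mtrace I (mmult I (mmult I B Y) (mmult I B Y))"
proof -
  obtain w \<mu> where qX: "\<And>v. qform I X v = (\<Sum>k\<in>I. (w v k)\<^sup>2)"
    and qY: "\<And>v. qform I Y v = (\<Sum>k\<in>I. \<mu> k * (w v k)\<^sup>2)"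
    and tr: "mtrace I (mmult I B Y) = (\<Sum>k\<in>I. \<mu> k)"
    and tr2: "mtrace I (mmult I (mmult I B Y) (mmult I B Y)) = (\<Sum>k\<in>I. (\<mu> k)\<^sup>2)"
    using simultaneous_diagonalization[OF Y] by blast
  then show ?thesis
    by (simp add: sum_nonneg)
qed

lemma qform_eq_0_if_trace_sq_eq_0:
  assumes Y: "msupp I Y" "mtransp Y = Y"
    and zero: "mtrace I (mmult I (mmult I B Y) (mmult I B Y)) = 0"
  shows "qform I Y v = 0"
proof -
  obtain w \<mu> where qX: "\<And>v. qform I X v = (\<Sum>k\<in>I. (w v k)\<^sup>2)"
    and qY: "\<And>v. qform I Y v = (\<Sum>k\<in>I. \<mu> k * (w v k)\<^sup>2)"
    and tr: "mtrace I (mmult I B Y) = (\<Sum>k\<in>I. \<mu> k)"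
    and tr2: "mtrace I (mmult I (mmult I B Y) (mmult I B Y)) = (\<Sum>k\<in>I. (\<mu> k)\<^sup>2)"
    using simultaneous_diagonalization[OF Y] by blast
  have "\<forall>k\<in>I. \<mu> k = 0"
    using zero I by (simp add: tr2 sum_nonneg_eq_0_iff)
  then show ?thesis
    by (simp add: qY)
qed

end

text \<open>If \<open>R\<^sup>2 e = \<mu>\<^sup>2 e\<close>, then \<open>u = R e - \<mu> e\<close> satisfies \<open>R u = - \<mu> u\<close>, which a
  positive semidefinite \<open>R\<close> only allows for \<open>u = 0\<close>.\<close>

lemma psd_on_eigenvector_if_square:
  assumes I: "finite I" and R: "mtransp R = R" "psd_on I R" and \<mu>: "0 \<le> \<mu>"
    and sq: "mvmult I R (mvmult I R e) = (\<lambda>a. \<mu> * (\<mu> * e a))" and a: "a \<in> I"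
  shows "mvmult I R e a = \<mu> * e a"
proof -
  define u where "u = (\<lambda>a. mvmult I R e a - \<mu> * e a)"
  have Ru: "mvmult I R u = (\<lambda>a. - \<mu> * u a)"
    using sq by (simp add: u_def mvmult_diff mvmult_scale algebra_simps)
  have "(\<Sum>a\<in>I. (u a)\<^sup>2) = 0"
  proof (cases "\<mu> = 0")
    case False
    have "0 \<le> qform I R u"
      using R(2) by (simp add: psd_on_def)
    also have "qform I R u = - \<mu> * (\<Sum>a\<in>I. (u a)\<^sup>2)"
      by (simp add: qform_eq_sum_mvmult Ru sum_distrib_left power2_eq_square mult_ac)
    finally show ?thesis
      using False \<mu> by (simp add: mult_le_0_iff sum_nonneg order.antisym)
  next
    case True
    then have "(\<Sum>a\<in>I. (u a)\<^sup>2) = (\<Sum>a\<in>I. e a * mvmult I R u a)"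
      using sum_mvmult_symmetric[OF R(1), where I = I and v = e and w = u]
      by (simp add: u_def power2_eq_square)
    also have "\<dots> = 0"
      by (simp add: Ru True)
    finally show ?thesis .
  qed
  then have "u a = 0"
    using I a by (simp add: sum_nonneg_eq_0_iff)
  then show ?thesis
    by (simp add: u_def)
qed

lemma fmat_eq_sum_columns:
  assumes I: "finite I" and P: "morth I P" and b: "b \<in> I"
  shows "R a b = (\<Sum>k\<in>I. mvmult I R (\<lambda>a. P a k) a * P b k)"
proof -
  have "(\<Sum>k\<in>I. mvmult I R (\<lambda>a. P a k) a * P b k) = (\<Sum>c\<in>I. R a c * (\<Sum>k\<in>I. P c k * P b k))"
    by (simp add: mvmult_def sum_distrib_left sum_distrib_right mult_ac) (rule sum.swap)
  also have "\<dots> = (\<Sum>c\<in>I. R a c * (if c = b then 1 else 0))"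
    by (rule sum.cong[OF refl]) (simp add: morth_rows[OF P _ b])
  also have "\<dots> = R a b"
    by (subst sum_eq_single_nonzero[OF I b]) auto
  finally show ?thesis ..
qed

lemma psd_on_square_root_unique:
  assumes I: "finite I"
    and R1: "msupp I R1" "mtransp R1 = R1" "psd_on I R1"
    and R2: "msupp I R2" "mtransp R2 = R2" "psd_on I R2"
    and eq: "mmult I R1 R1 = mmult I R2 R2"
  shows "R1 = R2"
proof (intro ext)
  obtain P \<mu> where P: "morth I P" and R1P: "R1 = spectral_mat I P \<mu>"
    using symmetric_spectral_decomposition[OF I R1(1,2)] by blast
  have same_columns: "mvmult I R2 (\<lambda>a. P a k) a = mvmult I R1 (\<lambda>a. P a k) a"
    if k: "k \<in> I" and a: "a \<in> I" for k a
  proof -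
    have R1e: "mvmult I R1 (\<lambda>a. P a k) = (\<lambda>a. \<mu> k * P a k)"
      unfolding R1P by (rule mvmult_spectral_mat_column[OF I P k])
    have "0 \<le> \<mu> k"
      using R1(3) qform_spectral_mat_column[OF I P k, of \<mu>] unfolding psd_on_def R1P by metis
    moreover have "mvmult I R2 (mvmult I R2 (\<lambda>a. P a k)) = mvmult I R1 (mvmult I R1 (\<lambda>a. P a k))"
      by (simp add: eq flip: mvmult_mmult)
    then have "mvmult I R2 (mvmult I R2 (\<lambda>a. P a k)) = (\<lambda>a. \<mu> k * (\<mu> k * P a k))"
      by (simp add: R1e mvmult_scale)
    ultimately show ?thesis
      using psd_on_eigenvector_if_square[OF I R2(2,3)] a by (simp add: R1e)
  qed
  fix a b
  show "R1 a b = R2 a b"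
  proof (cases "a \<in> I \<and> b \<in> I")
    case True
    then show ?thesis
      by (simp add: fmat_eq_sum_columns[OF I P, of b R1] fmat_eq_sum_columns[OF I P, of b R2] same_columns)
  next
    case False
    then show ?thesis
      using R1(1) R2(1) by (auto simp: msupp_def)
  qed
qed

section \<open>Square matrices over a finite type\<close>

definition fmat_of :: "real^'n^'n \<Rightarrow> 'n fmat" where
  "fmat_of A = (\<lambda>a b. A $ a $ b)"

lemma fmat_of_inject: "fmat_of A = fmat_of B \<Longrightarrow> A = B"
  by (simp add: fmat_of_def vec_eq_iff fun_eq_iff)

lemma fmat_of_chi [simp]: "fmat_of (\<chi> a b. F a b) = F"
  by (simp add: fmat_of_def)

lemma fmat_of_mult: "fmat_of (A ** B) = mmult UNIV (fmat_of A) (fmat_of B)"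
  by (simp add: fmat_of_def mmult_def matrix_matrix_mult_def)

lemma fmat_of_transpose: "fmat_of (transpose A) = mtransp (fmat_of A)"
  by (simp add: fmat_of_def mtransp_def transpose_def)

lemma fmat_of_mat_1: "fmat_of (mat 1) = mone UNIV"
  by (simp add: fmat_of_def mone_def mat_def fun_eq_iff)

lemma qform_fmat_of: "qform UNIV (fmat_of A) (($) v) = v \<bullet> (A *v v)"
  by (simp add: qform_def fmat_of_def inner_vec_def matrix_vector_mult_def sum_distrib_left mult.assoc)

lemma vec_nth_chi: "vec_nth (\<chi> a. v a) = v"
  by auto

lemma psd_on_fmat_of_iff:
  fixes A :: "real^'n^'n"
  shows "psd_on UNIV (fmat_of A) \<longleftrightarrow> (\<forall>v. 0 \<le> v \<bullet> (A *v v))"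
  unfolding psd_on_def by (metis qform_fmat_of vec_nth_chi)

lemma pd_on_fmat_of:
  fixes A :: "real^'n^'n"
  assumes "\<And>v. v \<noteq> 0 \<Longrightarrow> 0 < v \<bullet> (A *v v)"
  shows "pd_on UNIV (fmat_of A)"
  unfolding pd_on_def
proof (intro allI impI)
  fix v :: "'n \<Rightarrow> real"
  assume "\<exists>a\<in>UNIV. v a \<noteq> 0"
  then have "(\<chi> a. v a) \<noteq> 0"
    by (auto simp: vec_eq_iff)
  then show "0 < qform UNIV (fmat_of A) v"
    using assms qform_fmat_of[of A "\<chi> a. v a"] by (simp only: vec_nth_chi)
qed

lemma psd_sqrt_eq:
  fixes R :: "real^'n^'n"
  assumes "transpose R = R" "\<forall>v. 0 \<le> v \<bullet> (R *v v)"
  shows "psd_sqrt (R ** R) = R"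
  unfolding psd_sqrt_def
proof (rule the_equality)
  show "transpose R = R \<and> (\<forall>v. 0 \<le> v \<bullet> (R *v v)) \<and> R ** R = R ** R"
    using assms by simp
next
  fix R' :: "real^'n^'n"
  assume R': "transpose R' = R' \<and> (\<forall>v. 0 \<le> v \<bullet> (R' *v v)) \<and> R' ** R' = R ** R"
  have "fmat_of R' = fmat_of R"
    by (rule psd_on_square_root_unique[where I = UNIV])
      (use assms R' in \<open>simp_all add: fmat_of_transpose[symmetric] psd_on_fmat_of_iff fmat_of_mult[symmetric]\<close>)
  then show "R' = R"
    by (rule fmat_of_inject)
qed

lemma matrix_inv_eq:
  fixes A B :: "real^'n^'n"
  assumes "A ** B = mat 1" "B ** A = mat 1"
  shows "matrix_inv A = B"
proof -
  have inv: "A ** matrix_inv A = mat 1 \<and> matrix_inv A ** A = mat 1"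
    unfolding matrix_inv_def by (rule someI[of _ B]) (use assms in simp)
  have "matrix_inv A = (B ** A) ** matrix_inv A"
    using assms by simp
  also have "\<dots> = B"
    using inv by (simp add: matrix_mul_assoc[symmetric])
  finally show ?thesis .
qed

lemma matrix_inv_if_minverse:
  fixes M :: "real^'n^'n"
  assumes B: "minverse UNIV (fmat_of M) B"
  shows "matrix_inv M = (\<chi> a b. B a b)" "M ** matrix_inv M = mat 1" "matrix_inv M ** M = mat 1"
proof -
  have MB: "M ** (\<chi> a b. B a b) = mat 1" and BM: "(\<chi> a b. B a b) ** M = mat 1"
    by (rule fmat_of_inject, use B in \<open>simp add: fmat_of_mult fmat_of_mat_1 minverse_def\<close>)+
  then show "matrix_inv M = (\<chi> a b. B a b)"
    by (rule matrix_inv_eq)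
  with MB BM show "M ** matrix_inv M = mat 1" "matrix_inv M ** M = mat 1"
    by simp_all
qed

lemma pd_matrix_inverse_root:
  fixes M :: "real^'n^'n"
  assumes sym: "transpose M = M" and pd: "\<And>v. v \<noteq> 0 \<Longrightarrow> 0 < v \<bullet> (M *v v)"
  shows "M ** matrix_inv M = mat 1" "matrix_inv M ** M = mat 1"
    and "\<exists>R. transpose R = R \<and> (\<forall>v. 0 \<le> v \<bullet> (R *v v)) \<and> R ** R = matrix_inv M"
proof -
  have M: "msupp UNIV (fmat_of M)" "mtransp (fmat_of M) = fmat_of M" "pd_on UNIV (fmat_of M)"
    using sym pd_on_fmat_of[OF pd] by (simp_all add: fmat_of_transpose[symmetric])
  then obtain B where B: "minverse UNIV (fmat_of M) B"
    using pd_on_minverse_exists[OF finite] by blast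
  then show "M ** matrix_inv M = mat 1" "matrix_inv M ** M = mat 1"
    by (rule matrix_inv_if_minverse)+
  obtain R S where R: "mtransp R = R" "msupp UNIV R" "psd_on UNIV R"
    and "mtransp S = S" "msupp UNIV S"
    and RR: "mmult UNIV R R = B" and "mmult UNIV S R = mone UNIV" "mmult UNIV R S = mone UNIV"
    and "mmult UNIV S S = fmat_of M"
    by (rule pd_on_inverse_square_root[OF finite M B])
  have "transpose (\<chi> a b. R a b) = (\<chi> a b. R a b)"
    by (rule fmat_of_inject) (use R(1) in \<open>simp add: fmat_of_transpose\<close>)
  moreover have "\<forall>v. 0 \<le> v \<bullet> ((\<chi> a b. R a b) *v v)"
    using R(3) by (simp add: psd_on_fmat_of_iff[symmetric])
  moreover have "(\<chi> a b. R a b) ** (\<chi> a b. R a b) = matrix_inv M"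
    by (rule fmat_of_inject) (use RR in \<open>simp add: fmat_of_mult matrix_inv_if_minverse(1)[OF B]\<close>)
  ultimately show "\<exists>R. transpose R = R \<and> (\<forall>v. 0 \<le> v \<bullet> (R *v v)) \<and> R ** R = matrix_inv M"
    by blast
qed

lemma inner_symmetric_matrix:
  fixes R :: "real^'n^'n"
  assumes "transpose R = R"
  shows "(R *v x) \<bullet> y = x \<bullet> (R *v y)"
  by (metis assms dot_lmul_matrix inner_commute transpose_matrix_vector)

lemma norm_psd_sqrt_matrix_inv:
  fixes M :: "real^'n^'n"
  assumes "transpose M = M" "\<And>v. v \<noteq> 0 \<Longrightarrow> 0 < v \<bullet> (M *v v)"
  shows "(norm (psd_sqrt (matrix_inv M) *v s))\<^sup>2 = s \<bullet> (matrix_inv M *v s)"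
proof -
  obtain R where R: "transpose R = R" "\<forall>v. 0 \<le> v \<bullet> (R *v v)" and RR: "R ** R = matrix_inv M"
    using pd_matrix_inverse_root(3)[OF assms] by blast
  have "(norm (psd_sqrt (matrix_inv M) *v s))\<^sup>2 = (R *v s) \<bullet> (R *v s)"
    by (simp add: power2_norm_eq_inner psd_sqrt_eq[OF R] flip: RR)
  also have "\<dots> = s \<bullet> (matrix_inv M *v s)"
    by (simp add: inner_symmetric_matrix[OF R(1)] matrix_vector_mul_assoc RR)
  finally show ?thesis .
qed

section \<open>Polynomials\<close>

lemma pconst_mult: "pconst a * pconst b = pconst (a * b)"
  by (simp add: pconst_def mult_single)

lemma pconst_add: "pconst (a + b) = pconst a + pconst b"
  by (simp add: pconst_def single_add)

lemma pconst_diff: "pconst (a - b) = pconst a - pconst b"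
  by (simp add: pconst_def single_diff)

lemma poly_of_add: "poly_of q (c + d) = poly_of q c + poly_of q d"
  by (simp add: poly_of_def pconst_add distrib_right sum.distrib)

lemma poly_of_diff: "poly_of q (c - d) = poly_of q c - poly_of q d"
  by (simp add: poly_of_def pconst_diff left_diff_distrib sum_subtractf)

lemma poly_of_zero [simp]: "poly_of q 0 = 0"
  by (simp add: poly_of_def pconst_def)

lemma poly_of_scaleR: "poly_of q (a *\<^sub>R c) = pconst a * poly_of q c"
  by (simp add: poly_of_def sum_distrib_left mult.assoc flip: pconst_mult)

lemma poly_of_sum: "poly_of q (\<Sum>x\<in>S. f x) = (\<Sum>x\<in>S. poly_of q (f x))"
  by (induction S rule: infinite_finite_induct) (simp_all add: poly_of_add)

lemma inner_sum_list_right: "y \<bullet> sum_list (map f xs) = sum_list (map (\<lambda>x. y \<bullet> f x) xs)"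
  by (induction xs) (simp_all add: inner_add_right)

lemma poly_of_inj:
  assumes "is_basis_V n m g d q" "poly_of q c = poly_of q c'"
  shows "c = c'"
proof -
  have "poly_of q (c - c') = 0"
    using assms(2) by (simp add: poly_of_diff)
  then show ?thesis
    using assms(1) unfolding is_basis_V_def by auto
qed

lemma poly_of_coord:
  assumes "is_basis_V n m g d q" "P \<in> Vspace n m g d"
  shows "poly_of q (coord q P) = P"
proof -
  obtain c where c: "poly_of q c = P"
    using assms unfolding is_basis_V_def by blast
  show ?thesis
    unfolding coord_def by (rule theI[of "\<lambda>c. poly_of q c = P" c]) (use c poly_of_inj[OF assms(1)] in auto)
qed

lemma monomial_degree_add:
  fixes a b :: "nat \<Rightarrow>\<^sub>0 nat"
  shows "(\<Sum>v\<in>Poly_Mapping.keys (a + b). Poly_Mapping.lookup (a + b) v) =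
    (\<Sum>v\<in>Poly_Mapping.keys a. Poly_Mapping.lookup a v) + (\<Sum>v\<in>Poly_Mapping.keys b. Poly_Mapping.lookup b v)"
  by (rule setsum_keys_plus_distrib[where f = "\<lambda>k x. x"]) auto

lemma polys_mult:
  assumes h1: "h1 \<in> polys n k1" and h2: "h2 \<in> polys n k2"
  shows "h1 * h2 \<in> polys n (k1 + k2)"
proof -
  have key: "\<exists>a b. \<alpha> = a + b \<and> a \<in> Poly_Mapping.keys h1 \<and> b \<in> Poly_Mapping.keys h2"
    if "\<alpha> \<in> Poly_Mapping.keys (h1 * h2)" for \<alpha>
    using keys_mult[of h1 h2] that by blast
  have "in_vars n (h1 * h2)"
    unfolding in_vars_def
  proof (intro ballI)
    fix \<alpha> v
    assume "\<alpha> \<in> Poly_Mapping.keys (h1 * h2)" and v: "v \<in> Poly_Mapping.keys \<alpha>"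
    then obtain a b where ab: "\<alpha> = a + b" "a \<in> Poly_Mapping.keys h1" "b \<in> Poly_Mapping.keys h2"
      using key by blast
    have "v \<in> Poly_Mapping.keys a \<union> Poly_Mapping.keys b"
      using keys_add[of a b] v ab(1) by blast
    then show "v < n"
      using h1 h2 ab(2,3) unfolding polys_def in_vars_def by blast
  qed
  moreover have "total_deg_le (k1 + k2) (h1 * h2)"
    unfolding total_deg_le_def
  proof (intro ballI)
    fix \<alpha>
    assume "\<alpha> \<in> Poly_Mapping.keys (h1 * h2)"
    then obtain a b where ab: "\<alpha> = a + b" "a \<in> Poly_Mapping.keys h1" "b \<in> Poly_Mapping.keys h2"
      using key by blast
    then have "(\<Sum>v\<in>Poly_Mapping.keys a. Poly_Mapping.lookup a v) \<le> k1"
      "(\<Sum>v\<in>Poly_Mapping.keys b. Poly_Mapping.lookup b v) \<le> k2"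
      using h1 h2 unfolding polys_def total_deg_le_def by blast+
    then show "(\<Sum>v\<in>Poly_Mapping.keys \<alpha>. Poly_Mapping.lookup \<alpha> v) \<le> k1 + k2"
      unfolding ab(1) monomial_degree_add by linarith
  qed
  ultimately show ?thesis
    by (simp add: polys_def)
qed

lemma polys_add:
  assumes h1: "h1 \<in> polys n k" and h2: "h2 \<in> polys n k"
  shows "h1 + h2 \<in> polys n k"
proof -
  have keys: "Poly_Mapping.keys (h1 + h2) \<subseteq> Poly_Mapping.keys h1 \<union> Poly_Mapping.keys h2"
    by (rule keys_add)
  have "in_vars n h1" "in_vars n h2" "total_deg_le k h1" "total_deg_le k h2"
    using h1 h2 by (simp_all add: polys_def)
  then have "in_vars n (h1 + h2)" "total_deg_le k (h1 + h2)"
    unfolding in_vars_def total_deg_le_def using keys by (meson UnE subsetD)+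
  then show ?thesis
    by (simp add: polys_def)
qed

lemma polys_zero: "0 \<in> polys n k"
  by (simp add: polys_def in_vars_def total_deg_le_def)

lemma polys_pconst_mult:
  assumes "h \<in> polys n k"
  shows "pconst a * h \<in> polys n k"
proof -
  have "pconst a \<in> polys n 0"
    by (simp add: polys_def in_vars_def total_deg_le_def pconst_def)
  from polys_mult[OF this assms] show ?thesis
    by simp
qed

lemma polys_sum: "(\<And>x. x \<in> S \<Longrightarrow> f x \<in> polys n k) \<Longrightarrow> (\<Sum>x\<in>S. f x) \<in> polys n k"
  by (induction S rule: infinite_finite_induct) (auto simp: polys_zero polys_add)

lemma sum_lessThan_mult_delta:
  fixes g :: "nat \<Rightarrow> 'a::semiring_0"
  assumes "i < m"
  shows "(\<Sum>i'<m. g i' * (if i' = i then x else 0)) = g i * x"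
proof -
  have "(\<Sum>i'<m. g i' * (if i' = i then x else 0)) = (\<Sum>i'<m. if i' = i then g i * x else 0)"
    by (rule sum.cong) auto
  then show ?thesis
    using assms by simp
qed

lemma mult_in_Vspace:
  assumes "i < m" "P \<in> polys n (2 * d i)"
  shows "g i * P \<in> Vspace n m g d"
  unfolding Vspace_def mem_Collect_eq
proof (intro exI conjI allI impI)
  show "g i * P = (\<Sum>i'<m. g i' * (if i' = i then P else 0))"
    using assms(1) by (simp add: sum_lessThan_mult_delta)
  show "(if i' = i then P else 0) \<in> polys n (2 * d i')" for i'
    using assms(2) by (simp add: polys_zero)
qed

lemma square_in_sos: "h \<in> polys n k \<Longrightarrow> h * h \<in> sos n k"
  unfolding sos_def by (intro CollectI exI[of _ "[h]"]) simp

lemma zero_in_sos: "0 \<in> sos n k"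
  unfolding sos_def by (intro CollectI exI[of _ "[]"]) simp

lemma weighted_square_in_WSOS:
  assumes "i < m" "h \<in> polys n (d i)"
  shows "g i * (h * h) \<in> WSOS n m g d"
  unfolding WSOS_def mem_Collect_eq
proof (intro exI conjI allI impI)
  show "g i * (h * h) = (\<Sum>i'<m. g i' * (if i' = i then h * h else 0))"
    using assms(1) by (simp add: sum_lessThan_mult_delta)
  show "(if i' = i then h * h else 0) \<in> sos n (d i')" for i'
    using assms(2) by (simp add: square_in_sos zero_in_sos)
qed

section \<open>The block map \<open>\<Lambda>\<close> and the Hessian\<close>

lemma finite_bidx [simp]: "finite (bidx m L)"
  by (simp add: bidx_def)

lemma card_bidx: "card (bidx m L) = (\<Sum>i<m. L i)"
  by (simp add: bidx_def card_SigmaI)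

lemma sum_bidx: "(\<Sum>a\<in>bidx m L. F a) = (\<Sum>i<m. \<Sum>j<L i. F (i, j))"
  unfolding bidx_def by (subst sum.Sigma) (auto simp: split_def)

lemma sum_bidx_single_block:
  assumes "i < m" "\<And>i' j. i' \<noteq> i \<Longrightarrow> F (i', j) = 0"
  shows "(\<Sum>a\<in>bidx m L. F a) = (\<Sum>j<L i. F (i, j))"
proof -
  have "(\<Sum>a\<in>bidx m L. F a) = (\<Sum>i'<m. if i' = i then (\<Sum>j<L i. F (i, j)) else 0)"
    unfolding sum_bidx using assms(2) by (intro sum.cong refl) auto
  then show ?thesis
    using assms(1) by simp
qed

definition block_vec :: "nat \<Rightarrow> (nat \<Rightarrow> real) \<Rightarrow> nat \<times> nat \<Rightarrow> real" where
  "block_vec i c = (\<lambda>(i', j). if i' = i then c j else 0)"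

lemma qform_block_vec:
  assumes "i < m"
  shows "qform (bidx m L) Y (block_vec i c) = (\<Sum>j<L i. \<Sum>k<L i. c j * Y (i, j) (i, k) * c k)"
proof -
  have "qform (bidx m L) Y (block_vec i c)
      = (\<Sum>j<L i. \<Sum>b\<in>bidx m L. block_vec i c (i, j) * Y (i, j) b * block_vec i c b)"
    unfolding qform_def by (rule sum_bidx_single_block[OF assms]) (simp add: block_vec_def)
  also have "\<dots> = (\<Sum>j<L i. \<Sum>b\<in>bidx m L. c j * Y (i, j) b * block_vec i c b)"
    by (simp add: block_vec_def)
  also have "\<dots> = (\<Sum>j<L i. \<Sum>k<L i. c j * Y (i, j) (i, k) * block_vec i c (i, k))"
    by (intro sum.cong refl sum_bidx_single_block[OF assms]) (simp add: block_vec_def)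
  also have "\<dots> = (\<Sum>j<L i. \<Sum>k<L i. c j * Y (i, j) (i, k) * c k)"
    by (simp add: block_vec_def)
  finally show ?thesis .
qed

lemma qform_block_diagonal:
  assumes "\<And>i j i' k. i \<noteq> i' \<Longrightarrow> Y (i, j) (i', k) = 0"
  shows "qform (bidx m L) Y v = (\<Sum>i<m. qform (bidx m L) Y (block_vec i (\<lambda>j. v (i, j))))"
proof -
  have "qform (bidx m L) Y v = (\<Sum>i<m. \<Sum>j<L i. \<Sum>b\<in>bidx m L. v (i, j) * Y (i, j) b * v b)"
    by (simp add: qform_def sum_bidx[of _ m L])
  also have "\<dots> = (\<Sum>i<m. \<Sum>j<L i. \<Sum>k<L i. v (i, j) * Y (i, j) (i, k) * v (i, k))"
    by (intro sum.cong refl sum_bidx_single_block) (auto simp: assms)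
  also have "\<dots> = (\<Sum>i<m. qform (bidx m L) Y (block_vec i (\<lambda>j. v (i, j))))"
    by (simp add: qform_block_vec)
  finally show ?thesis .
qed

lemma bmat_mult_eq_mmult: "bmat_mult = mmult"
  by (simp add: fun_eq_iff bmat_mult_def mmult_def)

lemma binv_eq:
  assumes "finite I" "msupp I A" "minverse I A B"
  shows "binv I A = B"
  unfolding binv_def
proof (rule the_equality)
  show "(\<forall>a b. a \<notin> I \<or> b \<notin> I \<longrightarrow> B a b = 0) \<and>
      (\<forall>a\<in>I. \<forall>b\<in>I. bmat_mult I A B a b = (if a = b then 1 else 0))"
    using assms(3) unfolding minverse_def msupp_def bmat_mult_eq_mmult by (simp add: mone_def)
next
  fix B'
  assume B': "(\<forall>a b. a \<notin> I \<or> b \<notin> I \<longrightarrow> B' a b = 0) \<and>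
      (\<forall>a\<in>I. \<forall>b\<in>I. bmat_mult I A B' a b = (if a = b then 1 else 0))"
  then have "msupp I B'"
    by (simp add: msupp_def)
  moreover have "mmult I A B' = mone I"
  proof (intro ext)
    fix a b
    have supp: "msupp I (mmult I A B')"
      using assms(2) \<open>msupp I B'\<close> by (rule msupp_mmult)
    show "mmult I A B' a b = mone I a b"
    proof (cases "a \<in> I \<and> b \<in> I")
      case True
      then show ?thesis
        using B' by (simp add: bmat_mult_eq_mmult mone_def)
    next
      case False
      then have "mmult I A B' a b = 0"
        using supp unfolding msupp_def by blast
      with False show ?thesis
        by (auto simp: mone_def)
    qed
  qed
  ultimately have "B' = mmult I (mmult I B A) B'"
    using assms by (simp add: minverse_def mmult_mone_left)
  also have "\<dots> = mmult I B (mmult I A B')"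
    by (rule mmult_assoc)
  also have "\<dots> = B"
    using \<open>mmult I A B' = mone I\<close> assms by (simp add: minverse_def mmult_mone_right)
  finally show "B' = B" .
qed

lemma Lam_off_block: "i \<noteq> i' \<Longrightarrow> Lam m g L p q y (i, j) (i', k) = 0"
  by (simp add: Lam_def)

lemma msupp_Lam: "msupp (bidx m L) (Lam m g L p q y)"
  by (auto simp: msupp_def Lam_def)

lemma mtransp_Lam: "mtransp (Lam m g L p q y) = Lam m g L p q y"
proof (intro ext)
  fix a b :: "nat \<times> nat"
  obtain i j i' k where ab: "a = (i, j)" "b = (i', k)"
    by fastforce
  have "coord q (g i * p i k * p i j) = coord q (g i * p i j * p i k)"
    by (simp only: ac_simps)
  then show "mtransp (Lam m g L p q y) a b = Lam m g L p q y a b"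
    unfolding ab mtransp_def Lam_def by auto
qed

lemma Lam_linear: "Lam m g L p q y = (\<lambda>a b. \<Sum>u\<in>UNIV. y $ u * Lam m g L p q (axis u 1) a b)"
proof (intro ext)
  fix a b :: "nat \<times> nat"
  obtain i j i' k where ab: "a = (i, j)" "b = (i', k)"
    by fastforce
  let ?C = "coord q (g i * p i j * p i k)"
  let ?in = "(i, j) \<in> bidx m L \<and> (i', k) \<in> bidx m L \<and> i = i'"
  have Lam_ab: "Lam m g L p q z a b = (if ?in then (\<Sum>u\<in>UNIV. z $ u * ?C $ u) else 0)" for z
    unfolding ab Lam_def by simp
  have axis: "(\<Sum>u'\<in>UNIV. axis u 1 $ u' * ?C $ u') = ?C $ u" for u
    by (subst sum_eq_single_nonzero[of UNIV u]) (auto simp: axis_def)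
  show "Lam m g L p q y a b = (\<Sum>u\<in>UNIV. y $ u * Lam m g L p q (axis u 1) a b)"
  proof (cases ?in)
    case True
    then have "?in = True"
      by blast
    then show ?thesis
      by (simp only: Lam_ab if_True axis)
  next
    case False
    then have "?in = False"
      by blast
    then show ?thesis
      by (simp only: Lam_ab if_False) simp
  qed
qed

lemma Lam_add: "Lam m g L p q (x + w) = (\<lambda>a b. Lam m g L p q x a b + Lam m g L p q w a b)"
  by (auto simp: Lam_def fun_eq_iff sum.distrib algebra_simps)

lemma mtrace_mmult_linear:
  "mtrace I (mmult I (\<lambda>a b. \<Sum>u\<in>U. w u * F u a b) M) = (\<Sum>u\<in>U. w u * mtrace I (mmult I (F u) M))"
proof -
  have "mtrace I (mmult I (\<lambda>a b. \<Sum>u\<in>U. w u * F u a b) M) = (\<Sum>a\<in>I. \<Sum>c\<in>I. \<Sum>u\<in>U. w u * F u a c * M c a)"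
    by (simp add: mtrace_def mmult_def sum_distrib_right)
  also have "\<dots> = (\<Sum>u\<in>U. \<Sum>a\<in>I. \<Sum>c\<in>I. w u * F u a c * M c a)"
    by (subst sum.swap) (rule sum.cong[OF refl], rule sum.swap)
  also have "\<dots> = (\<Sum>u\<in>U. w u * mtrace I (mmult I (F u) M))"
    by (simp add: mtrace_def mmult_def sum_distrib_left mult.assoc)
  finally show ?thesis .
qed

lemma mtrace_sandwich_commute:
  "mtrace I (mmult I A (mmult I (mmult I B C) B)) = mtrace I (mmult I C (mmult I (mmult I B A) B))"
proof -
  have "mtrace I (mmult I A (mmult I (mmult I B C) B)) = mtrace I (mmult I B (mmult I (mmult I A B) C))"
    by (subst mtrace_mmult_commute) (simp add: mmult_assoc)
  also have "\<dots> = mtrace I (mmult I C (mmult I (mmult I B A) B))"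
    by (subst mtrace_mmult_commute) (simp add: mmult_assoc)
  finally show ?thesis .
qed

lemma Hess_apply:
  "Hess m g L p q x $ v $ u = mtrace (bidx m L) (mmult (bidx m L) (Lam m g L p q (axis v 1))
      (mmult (bidx m L) (mmult (bidx m L) (binv (bidx m L) (Lam m g L p q x)) (Lam m g L p q (axis u 1)))
         (binv (bidx m L) (Lam m g L p q x))))"
  by (simp add: Hess_def Lam_adj_def Let_def bmat_mult_def btrace_def mmult_def mtrace_def)

lemma grad_apply:
  "grad m g L p q x $ v = - mtrace (bidx m L) (mmult (bidx m L) (Lam m g L p q (axis v 1)) (binv (bidx m L) (Lam m g L p q x)))"
  by (simp add: grad_def Lam_adj_def bmat_mult_def btrace_def mmult_def mtrace_def)

lemma transpose_Hess: "transpose (Hess m g L p q x) = Hess m g L p q x"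
  unfolding transpose_def vec_eq_iff Hess_apply by (simp add: mtrace_sandwich_commute)

lemma Hess_mult_apply:
  fixes m :: nat and g :: "nat \<Rightarrow> rpoly" and L :: "nat \<Rightarrow> nat" and p :: "nat \<Rightarrow> nat \<Rightarrow> rpoly"
    and q :: "'U::finite \<Rightarrow> rpoly" and x :: "real^'U"
  defines "I \<equiv> bidx m L" and "B \<equiv> binv (bidx m L) (Lam m g L p q x)"
  shows "(Hess m g L p q x *v y) $ v
    = mtrace I (mmult I (Lam m g L p q (axis v 1)) (mmult I (mmult I B (Lam m g L p q y)) B))"
proof -
  let ?E = "\<lambda>u. Lam m g L p q (axis u 1)"
  have "(Hess m g L p q x *v y) $ v = (\<Sum>u\<in>UNIV. y $ u * mtrace I (mmult I (?E u) (mmult I (mmult I B (?E v)) B)))"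
    unfolding matrix_vector_mult_def Hess_apply I_def B_def by (simp add: mtrace_sandwich_commute mult.commute)
  also have "\<dots> = mtrace I (mmult I (Lam m g L p q y) (mmult I (mmult I B (?E v)) B))"
    by (subst (2) Lam_linear) (rule mtrace_mmult_linear[symmetric])
  also have "\<dots> = mtrace I (mmult I (?E v) (mmult I (mmult I B (Lam m g L p q y)) B))"
    by (rule mtrace_sandwich_commute)
  finally show ?thesis .
qed

lemma inner_Hess:
  fixes m :: nat and g :: "nat \<Rightarrow> rpoly" and L :: "nat \<Rightarrow> nat" and p :: "nat \<Rightarrow> nat \<Rightarrow> rpoly"
    and q :: "'U::finite \<Rightarrow> rpoly" and x :: "real^'U"
  defines "I \<equiv> bidx m L" and "B \<equiv> binv (bidx m L) (Lam m g L p q x)"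
  shows "z \<bullet> (Hess m g L p q x *v y)
    = mtrace I (mmult I (Lam m g L p q z) (mmult I (mmult I B (Lam m g L p q y)) B))"
proof -
  have "z \<bullet> (Hess m g L p q x *v y)
      = (\<Sum>v\<in>UNIV. z $ v * mtrace I (mmult I (Lam m g L p q (axis v 1)) (mmult I (mmult I B (Lam m g L p q y)) B)))"
    unfolding inner_vec_def Hess_mult_apply I_def B_def by simp
  also have "\<dots> = mtrace I (mmult I (Lam m g L p q z) (mmult I (mmult I B (Lam m g L p q y)) B))"
    by (subst (2) Lam_linear) (rule mtrace_mmult_linear[symmetric])
  finally show ?thesis .
qed

lemma inner_Hess_self:
  fixes m :: nat and g :: "nat \<Rightarrow> rpoly" and L :: "nat \<Rightarrow> nat" and p :: "nat \<Rightarrow> nat \<Rightarrow> rpoly"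
    and q :: "'U::finite \<Rightarrow> rpoly" and x :: "real^'U"
  defines "I \<equiv> bidx m L" and "B \<equiv> binv (bidx m L) (Lam m g L p q x)"
  shows "y \<bullet> (Hess m g L p q x *v y)
    = mtrace I (mmult I (mmult I B (Lam m g L p q y)) (mmult I B (Lam m g L p q y)))"
  unfolding I_def B_def inner_Hess
  by (subst mtrace_mmult_commute) (simp add: mmult_assoc)

section \<open>The cone of weighted sums of squares\<close>

lemma proper_cone_interior_nonzero:
  fixes K :: "(real^'a) set"
  assumes "proper_cone K" "t \<in> interior K"
  shows "t \<noteq> 0"
proof
  assume t0: "t = 0"
  obtain e where e: "e > 0" "ball t e \<subseteq> K"
    using assms(2) mem_interior by blast
  define w :: "real^'a" where "w = (e / 2) *\<^sub>R axis undefined 1"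
  have "norm w = e / 2"
    using e by (simp add: w_def)
  then have "w \<in> K" "- w \<in> K"
    using e t0 by (auto simp: dist_norm)
  then have "w = 0"
    using assms(1) unfolding proper_cone_def by force
  with \<open>norm w = e / 2\<close> e show False
    by simp
qed

lemma inner_pos_if_interior_dual_cone:
  assumes x: "x \<in> interior (dual_cone K)" and s: "s \<in> K" "s \<noteq> 0"
  shows "0 < x \<bullet> s"
proof -
  obtain e where e: "e > 0" "ball x e \<subseteq> dual_cone K"
    using x mem_interior by blast
  define y where "y = x - (e / 2 / norm s) *\<^sub>R s"
  have "dist x y < e"
    using e s by (simp add: y_def dist_norm)
  then have "0 \<le> y \<bullet> s"
    using e s by (auto simp: dual_cone_def)
  then have "(e / 2 / norm s) * (s \<bullet> s) \<le> x \<bullet> s"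
    by (simp add: y_def inner_diff_left)
  moreover have "0 < (e / 2 / norm s) * (s \<bullet> s)"
    using e s by simp
  ultimately show ?thesis
    by linarith
qed

lemma inner_outer_diff:
  "t \<bullet> ((outer x - c *\<^sub>R M) *v t) = (x \<bullet> t)\<^sup>2 - c * (t \<bullet> (M *v t))"
proof -
  have "outer x *v t = (x \<bullet> t) *\<^sub>R x"
    by (simp add: outer_def matrix_vector_mult_def inner_vec_def vec_eq_iff sum_distrib_left mult_ac)
  then show ?thesis
    by (simp add: matrix_vector_mult_diff_rdistrib inner_diff_right power2_eq_square inner_commute
        flip: scaleR_matrix_vector_assoc)
qed

locale wsos_setup =
  fixes n m :: nat and g :: "nat \<Rightarrow> rpoly" and d L :: "nat \<Rightarrow> nat"
    and p :: "nat \<Rightarrow> nat \<Rightarrow> rpoly" and q :: "'U::finite \<Rightarrow> rpoly"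
  assumes standing: "standing n m g d L p q"
begin

abbreviation "K \<equiv> Sig n m g d q"
abbreviation "J \<equiv> bidx m L"
abbreviation "\<Lambda> \<equiv> Lam m g L p q"

lemma g_nonzero: "i < m \<Longrightarrow> g i \<noteq> 0"
  and proper_cone_K: "proper_cone K"
  and basis_V: "is_basis_V n m g d q"
  and basis_polys: "i < m \<Longrightarrow> is_basis_polys n (d i) (L i) (p i)"
  using standing by (auto simp: standing_def)

definition basis_comb :: "nat \<Rightarrow> (nat \<Rightarrow> real) \<Rightarrow> rpoly" where
  "basis_comb i c = (\<Sum>j<L i. pconst (c j) * p i j)"

definition sq_coords :: "nat \<Rightarrow> (nat \<Rightarrow> real) \<Rightarrow> real^'U" where
  "sq_coords i c = (\<Sum>j<L i. \<Sum>k<L i. (c j * c k) *\<^sub>R coord q (g i * p i j * p i k))"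

lemma basis_comb_in_polys: "i < m \<Longrightarrow> basis_comb i c \<in> polys n (d i)"
  unfolding basis_comb_def using basis_polys
  by (intro polys_sum polys_pconst_mult) (auto simp: is_basis_polys_def)

lemma polys_eq_basis_comb:
  assumes "i < m" "h \<in> polys n (d i)"
  obtains c where "h = basis_comb i c"
  using assms basis_polys unfolding is_basis_polys_def basis_comb_def by blast

lemma poly_of_sq_coords:
  assumes i: "i < m"
  shows "poly_of q (sq_coords i c) = g i * (basis_comb i c * basis_comb i c)"
proof -
  have "g i * p i j * p i k \<in> Vspace n m g d" if "j < L i" "k < L i" for j k
  proof -
    have "p i j * p i k \<in> polys n (d i + d i)"
      using basis_polys[OF i] that by (intro polys_mult) (auto simp: is_basis_polys_def)
    then show ?thesis
      using mult_in_Vspace[OF i, of "p i j * p i k" n d g] by (simp add: mult_2 mult.assoc)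
  qed
  then have "poly_of q (sq_coords i c) = (\<Sum>j<L i. \<Sum>k<L i. pconst (c j * c k) * (g i * p i j * p i k))"
    unfolding sq_coords_def poly_of_sum poly_of_scaleR by (simp add: poly_of_coord[OF basis_V])
  also have "\<dots> = g i * (\<Sum>j<L i. \<Sum>k<L i. (pconst (c j) * p i j) * (pconst (c k) * p i k))"
    by (simp add: sum_distrib_left ac_simps flip: pconst_mult)
  also have "\<dots> = g i * (basis_comb i c * basis_comb i c)"
    by (simp add: basis_comb_def sum_product)
  finally show ?thesis .
qed

lemma sq_coords_in_K: "i < m \<Longrightarrow> sq_coords i c \<in> K"
  unfolding Sig_def by (simp add: poly_of_sq_coords weighted_square_in_WSOS basis_comb_in_polys)

lemma sq_coords_nonzero:
  assumes i: "i < m" and j: "j < L i" "c j \<noteq> 0"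
  shows "sq_coords i c \<noteq> 0"
proof
  assume "sq_coords i c = 0"
  then have "g i * (basis_comb i c * basis_comb i c) = 0"
    using poly_of_sq_coords[OF i, of c] by simp
  then have "(\<Sum>j<L i. pconst (c j) * p i j) = 0"
    using g_nonzero[OF i] by (simp add: basis_comb_def)
  then show False
    using basis_polys[OF i] j unfolding is_basis_polys_def by blast
qed

lemma inner_sq_coords:
  assumes i: "i < m"
  shows "y \<bullet> sq_coords i c = qform J (\<Lambda> y) (block_vec i c)"
proof -
  have "y \<bullet> coord q (g i * p i j * p i k) = \<Lambda> y (i, j) (i, k)" if "j < L i" "k < L i" for j k
    using i that by (simp add: Lam_def bidx_def inner_vec_def)
  then show ?thesis
    unfolding sq_coords_def qform_block_vec[OF i] inner_sum_right inner_scaleR_right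
    by (intro sum.cong refl) (simp add: mult_ac)
qed

lemma weighted_sos_eq_poly_of:
  assumes i: "i < m" and \<sigma>: "\<sigma> \<in> sos n (d i)"
  obtains cs where "g i * \<sigma> = poly_of q (sum_list (map (sq_coords i) cs))"
proof -
  obtain hs where hs: "set hs \<subseteq> polys n (d i)" "\<sigma> = sum_list (map (\<lambda>h. h * h) hs)"
    using \<sigma> unfolding sos_def by blast
  have "\<exists>cs. g i * sum_list (map (\<lambda>h. h * h) hs) = poly_of q (sum_list (map (sq_coords i) cs))"
    using hs(1)
  proof (induction hs)
    case Nil
    then show ?case
      by (intro exI[of _ "[]"]) simp
  next
    case (Cons h hs)
    then obtain cs where cs: "g i * sum_list (map (\<lambda>h. h * h) hs) = poly_of q (sum_list (map (sq_coords i) cs))"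
      by auto
    obtain c where "h = basis_comb i c"
      using polys_eq_basis_comb[OF i] Cons.prems by auto
    then have "g i * sum_list (map (\<lambda>h. h * h) (h # hs)) = poly_of q (sum_list (map (sq_coords i) (c # cs)))"
      using cs by (simp add: distrib_left poly_of_add poly_of_sq_coords[OF i])
    then show ?case ..
  qed
  with hs(2) that show ?thesis
    by blast
qed

lemma K_eq_sum_sq_coords:
  assumes s: "s \<in> K"
  obtains cs where "s = (\<Sum>i<m. sum_list (map (sq_coords i) (cs i)))"
proof -
  obtain \<sigma> where s\<sigma>: "poly_of q s = (\<Sum>i<m. g i * \<sigma> i)" and \<sigma>: "\<forall>i<m. \<sigma> i \<in> sos n (d i)"
    using s unfolding Sig_def WSOS_def by blast
  have "\<forall>i. \<exists>cs. i < m \<longrightarrow> g i * \<sigma> i = poly_of q (sum_list (map (sq_coords i) cs))"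
    using weighted_sos_eq_poly_of \<sigma> by metis
  then obtain cs where cs: "\<And>i. i < m \<Longrightarrow> g i * \<sigma> i = poly_of q (sum_list (map (sq_coords i) (cs i)))"
    by metis
  have "poly_of q (\<Sum>i<m. sum_list (map (sq_coords i) (cs i))) = poly_of q s"
    by (simp add: poly_of_sum s\<sigma> cs)
  then show ?thesis
    using that poly_of_inj[OF basis_V] by metis
qed

lemma inner_K_eq_sum_qform:
  assumes "s \<in> K"
  shows "\<exists>cs. \<forall>y. y \<bullet> s = (\<Sum>i<m. sum_list (map (\<lambda>c. qform J (\<Lambda> y) (block_vec i c)) (cs i)))"
proof -
  obtain cs where s: "s = (\<Sum>i<m. sum_list (map (sq_coords i) (cs i)))"
    using K_eq_sum_sq_coords[OF assms] .
  have "y \<bullet> s = (\<Sum>i<m. sum_list (map (\<lambda>c. qform J (\<Lambda> y) (block_vec i c)) (cs i)))" for y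
    unfolding s inner_sum_right inner_sum_list_right
    by (intro sum.cong refl arg_cong[where f = sum_list] map_cong) (simp_all add: inner_sq_coords)
  then show ?thesis
    by blast
qed

lemma dual_cone_if_psd_on_Lam:
  assumes "psd_on J (\<Lambda> y)"
  shows "y \<in> dual_cone K"
  unfolding dual_cone_def
proof (intro CollectI ballI)
  fix s
  assume "s \<in> K"
  then obtain cs where "\<forall>y. y \<bullet> s = (\<Sum>i<m. sum_list (map (\<lambda>c. qform J (\<Lambda> y) (block_vec i c)) (cs i)))"
    using inner_K_eq_sum_qform by blast
  then have "y \<bullet> s = (\<Sum>i<m. sum_list (map (\<lambda>c. qform J (\<Lambda> y) (block_vec i c)) (cs i)))"
    by blast
  also have "0 \<le> \<dots>"
    using assms by (intro sum_nonneg sum_list_nonneg) (auto simp: psd_on_def)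
  finally show "0 \<le> y \<bullet> s" .
qed

text \<open>\<open>\<Lambda>\<close> is injective because \<open>K\<close> spans the whole space.\<close>

lemma eq_0_if_qform_Lam_eq_0:
  assumes "\<And>v. qform J (\<Lambda> y) v = 0"
  shows "y = 0"
proof (rule ccontr)
  assume y: "y \<noteq> 0"
  have orth: "y \<bullet> s = 0" if s: "s \<in> K" for s
  proof -
    obtain cs where cs: "\<forall>y. y \<bullet> s = (\<Sum>i<m. sum_list (map (\<lambda>c. qform J (\<Lambda> y) (block_vec i c)) (cs i)))"
      using inner_K_eq_sum_qform[OF s] by blast
    show ?thesis
      by (simp add: cs assms)
  qed
  obtain t where "t \<in> interior K"
    using proper_cone_K by (auto simp: proper_cone_def)
  then obtain e where e: "e > 0" "ball t e \<subseteq> K"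
    using mem_interior by blast
  define t' where "t' = t + (e / 2 / norm y) *\<^sub>R y"
  have "dist t t' < e"
    using e y by (simp add: t'_def dist_norm)
  then have "t' \<in> K" "t \<in> K"
    using e by (auto simp: dist_commute)
  then have "y \<bullet> t' = 0" "y \<bullet> t = 0"
    using orth by auto
  then have "(e / 2 / norm y) * (y \<bullet> y) = 0"
    by (simp add: t'_def inner_add_right)
  with e y show False
    by simp
qed

lemma pd_on_Lam_if_interior:
  assumes x: "x \<in> interior (dual_cone K)"
  shows "pd_on J (\<Lambda> x)"
  unfolding pd_on_def
proof (intro allI impI)
  fix v :: "nat \<times> nat \<Rightarrow> real"
  assume "\<exists>a\<in>J. v a \<noteq> 0"
  then obtain i0 j0 where i0: "i0 < m" "j0 < L i0" "v (i0, j0) \<noteq> 0"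
    by (auto simp: bidx_def)
  have "x \<in> dual_cone K"
    using x interior_subset by blast
  then have nonneg: "0 \<le> qform J (\<Lambda> x) (block_vec i (\<lambda>j. v (i, j)))" if "i < m" for i
    using sq_coords_in_K[OF that] by (auto simp: dual_cone_def inner_sq_coords[OF that, symmetric])
  have "0 < x \<bullet> sq_coords i0 (\<lambda>j. v (i0, j))"
    using inner_pos_if_interior_dual_cone[OF x sq_coords_in_K[OF i0(1)] sq_coords_nonzero[where c = "\<lambda>j. v (i0, j)", OF i0]] .
  then have "0 < qform J (\<Lambda> x) (block_vec i0 (\<lambda>j. v (i0, j)))"
    by (simp add: inner_sq_coords[OF i0(1)])
  then have "0 < (\<Sum>i<m. qform J (\<Lambda> x) (block_vec i (\<lambda>j. v (i, j))))"
    using i0(1) nonneg by (intro sum_pos2[of _ i0]) auto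
  then show "0 < qform J (\<Lambda> x) v"
    by (simp add: qform_block_diagonal Lam_off_block)
qed

context
  fixes x :: "real^'U"
  assumes x: "x \<in> interior (dual_cone K)"
begin

lemma minverse_binv_Lam: "minverse J (\<Lambda> x) (binv J (\<Lambda> x))"
proof -
  obtain B where "minverse J (\<Lambda> x) B"
    using pd_on_minverse_exists[OF finite_bidx msupp_Lam mtransp_Lam pd_on_Lam_if_interior[OF x]] by blast
  moreover from this have "binv J (\<Lambda> x) = B"
    by (rule binv_eq[OF finite_bidx msupp_Lam])
  ultimately show ?thesis
    by simp
qed

lemma inner_Hess_interior:
  "x \<bullet> (Hess m g L p q x *v y) = mtrace J (mmult J (binv J (\<Lambda> x)) (\<Lambda> y))"
proof -
  let ?B = "binv J (\<Lambda> x)"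
  have "mmult J (mmult J ?B (\<Lambda> y)) (mmult J ?B (\<Lambda> x)) = mmult J ?B (\<Lambda> y)"
    using minverse_binv_Lam by (simp add: minverse_def mmult_mone_right msupp_mmult msupp_Lam)
  then show ?thesis
    unfolding inner_Hess by (subst mtrace_mmult_commute) (simp add: mmult_assoc)
qed

lemma Hess_mult_self: "Hess m g L p q x *v x = - grad m g L p q x"
proof -
  let ?B = "binv J (\<Lambda> x)"
  have "mmult J (mmult J ?B (\<Lambda> x)) ?B = ?B"
    using minverse_binv_Lam by (simp add: minverse_def mmult_mone_left)
  then show ?thesis
    by (simp add: vec_eq_iff Hess_mult_apply grad_apply)
qed

lemma Hess_pd:
  assumes "y \<noteq> 0"
  shows "0 < y \<bullet> (Hess m g L p q x *v y)"
proof -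
  note diag = finite_bidx msupp_Lam mtransp_Lam pd_on_Lam_if_interior[OF x] minverse_binv_Lam
  have "0 \<le> y \<bullet> (Hess m g L p q x *v y)"
    unfolding inner_Hess_self by (rule trace_sq_nonneg[OF diag msupp_Lam mtransp_Lam])
  moreover have "y \<bullet> (Hess m g L p q x *v y) \<noteq> 0"
    using qform_eq_0_if_trace_sq_eq_0[OF diag msupp_Lam mtransp_Lam] eq_0_if_qform_Lam_eq_0 assms
    unfolding inner_Hess_self by blast
  ultimately show ?thesis
    by linarith
qed

end

lemma dual_certificate_if_cone_condition:
  assumes t: "t \<in> interior K" and x: "x \<in> interior (dual_cone K)"
    and cond: "0 \<le> t \<bullet> ((outer x - (real (card J) - 1) *\<^sub>R matrix_inv (Hess m g L p q x)) *v t)"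
  shows "matrix_inv (Hess m g L p q x) *v t \<in> dual_cone K"
proof -
  let ?H = "Hess m g L p q x" and ?B = "binv J (\<Lambda> x)"
  define w where "w = matrix_inv ?H *v t"
  have "?H ** matrix_inv ?H = mat 1"
    by (rule pd_matrix_inverse_root(1)[OF transpose_Hess Hess_pd[OF x]])
  then have Hw: "?H *v w = t"
    by (simp add: w_def matrix_vector_mul_assoc)
  have "t \<in> K" "t \<noteq> 0"
    using t interior_subset proper_cone_interior_nonzero[OF proper_cone_K] by auto
  then have "0 < x \<bullet> t"
    by (rule inner_pos_if_interior_dual_cone[OF x])
  moreover have "x \<bullet> t = mtrace J (mmult J ?B (\<Lambda> w))"
    using inner_Hess_interior[OF x, of w] by (simp add: Hw)
  moreover have "t \<bullet> (matrix_inv ?H *v t) = w \<bullet> (?H *v w)"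
    unfolding Hw w_def[symmetric] by (rule inner_commute)
  moreover have "\<dots> = mtrace J (mmult J (mmult J ?B (\<Lambda> w)) (mmult J ?B (\<Lambda> w)))"
    by (rule inner_Hess_self)
  ultimately have "psd_on J (\<Lambda> w)"
    using cond by (intro psd_on_if_trace_bound[OF finite_bidx msupp_Lam mtransp_Lam pd_on_Lam_if_interior[OF x]
          minverse_binv_Lam[OF x] msupp_Lam mtransp_Lam]) (simp_all add: inner_outer_diff)
  then show ?thesis
    unfolding w_def by (rule dual_cone_if_psd_on_Lam)
qed

lemma dual_certificate_if_near_neg_grad:
  assumes x: "x \<in> interior (dual_cone K)"
    and near: "dual_local_norm (Hess m g L p q x) (t - (- grad m g L p q x)) \<le> 1"
  shows "matrix_inv (Hess m g L p q x) *v t \<in> dual_cone K"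
proof -
  let ?H = "Hess m g L p q x" and ?B = "binv J (\<Lambda> x)"
  define \<delta> where "\<delta> = t - (- grad m g L p q x)"
  define w where "w = matrix_inv ?H *v \<delta>"
  note inv = pd_matrix_inverse_root(1,2)[OF transpose_Hess Hess_pd[OF x]]
  have "(norm (psd_sqrt (matrix_inv ?H) *v \<delta>))\<^sup>2 \<le> 1"
    using near by (simp add: dual_local_norm_def \<delta>_def power_le_one)
  then have "\<delta> \<bullet> (matrix_inv ?H *v \<delta>) \<le> 1"
    by (simp add: norm_psd_sqrt_matrix_inv[OF transpose_Hess Hess_pd[OF x]])
  moreover have "?H *v w = \<delta>"
    using inv by (simp add: w_def matrix_vector_mul_assoc)
  then have "\<delta> \<bullet> (matrix_inv ?H *v \<delta>) = w \<bullet> (?H *v w)"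
    unfolding w_def[symmetric] by (simp add: inner_commute)
  ultimately have "mtrace J (mmult J (mmult J ?B (\<Lambda> w)) (mmult J ?B (\<Lambda> w))) \<le> 1"
    by (simp add: inner_Hess_self)
  then have "psd_on J (\<lambda>a b. \<Lambda> x a b + \<Lambda> w a b)"
    by (rule psd_on_add_if_trace_sq_le_one[OF finite_bidx msupp_Lam mtransp_Lam pd_on_Lam_if_interior[OF x]
          minverse_binv_Lam[OF x] msupp_Lam mtransp_Lam])
  then have "x + w \<in> dual_cone K"
    by (simp add: dual_cone_if_psd_on_Lam Lam_add)
  moreover have "matrix_inv ?H *v t = x + w"
  proof -
    have "t = \<delta> + ?H *v x"
      by (simp add: \<delta>_def Hess_mult_self[OF x])
    then show ?thesis
      using inv by (simp add: w_def matrix_vector_right_distrib matrix_vector_mul_assoc add.commute)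
  qed
  ultimately show ?thesis
    by simp
qed

end

theorem lemma2:
  fixes n m :: nat and g :: "nat \<Rightarrow> rpoly" and d L :: "nat \<Rightarrow> nat"
    and p :: "nat \<Rightarrow> nat \<Rightarrow> rpoly" and q :: "'U::finite \<Rightarrow> rpoly"
  assumes "standing n m g d L p q"
  defines "\<Sigma> \<equiv> Sig n m g d q"
    and "H \<equiv> Hess m g L p q"
    and "\<nu> \<equiv> (\<Sum>i<m. L i)"
  shows "(\<forall>t x. t \<in> interior \<Sigma> \<longrightarrow> x \<in> interior (dual_cone \<Sigma>) \<longrightarrow>
            0 \<le> t \<bullet> ((outer x - (real \<nu> - 1) *\<^sub>R matrix_inv (H x)) *v t) \<longrightarrow>
            x \<in> Cert \<Sigma> H t \<and> t \<in> Pset \<Sigma> H x)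
      \<and> (\<forall>x t. x \<in> interior (dual_cone \<Sigma>) \<longrightarrow>
            dual_local_norm (H x) (t - (- grad m g L p q x)) \<le> 1 \<longrightarrow>
            matrix_inv (H x) *v t \<in> dual_cone \<Sigma>)"
proof -
  interpret wsos_setup n m g d L p q
    by unfold_locales (rule assms)
  have \<nu>: "real \<nu> - 1 = real (card (bidx m L)) - 1"
    by (simp add: \<nu>_def card_bidx)
  show ?thesis
    unfolding \<Sigma>_def H_def Cert_def Pset_def \<nu>
    using dual_certificate_if_cone_condition dual_certificate_if_near_neg_grad interior_subset
    by blast
qed

end
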